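(* Consider the deterministic discrete-time LTI system $$\bar x_{k+1}=\mathcal{A}_\mathrm{L}\bar x_k+\mathcal{B}_\mathrm{L}u_k,\qquad y_k=\begin{bmatrix}\mathcal{C}&\mathcal{C}_\mathrm{d}\end{bmatrix}\bar x_k+\mathcal{D}u_k,$$ with $\bar x_k=[x_k^\top\ d_k^\top]^\top\in\mathbb{R}^{\bar n}$, $x_k\in\mathbb{R}^{n_\mathrm{x}}$, $d_k\in\mathbb{R}^{n_\mathrm{d}}$, $\bar n=n_\mathrm{x}+n_\mathrm{d}$, $u_k\in\mathbb{R}^{n_\mathrm{u}}$, $y_k\in\mathbb{R}^{n_\mathrm{y}}$, $\mathcal{A}_\mathrm{L}=\begin{bmatrix}\mathcal{A}&\mathcal{B}_\mathrm{d}\\0&\mathcal{A}_\mathrm{d}\end{bmatrix}$, $\mathcal{B}_\mathrm{L}=\begin{bmatrix}\mathcal{B}\\0\end{bmatrix}$. Let $\{u^\mathrm{m}_k\}_{k=0}^{N+L+\bar n-2}$ be a measured input sequence with resulting state trajectory $\bar x^\mathrm{m}_k=[(x^\mathrm{m}_k)^\top\ (d^\mathrm{m}_k)^\top]^\top$ and output trajectory $y^\mathrm{m}_k$. Assume that $(\mathcal{A},\mathcal{B})$ is controllable, that the controllability matrix $\mathcal{K}_\mathrm{d}:=\begin{bmatrix}d^\mathrm{m}_0&\mathcal{A}_\mathrm{d}d^\mathrm{m}_0&\cdots&\mathcal{A}_\mathrm{d}^{n_\mathrm{d}-1}d^\mathrm{m}_0\end{bmatrix}$ has rank $\nu$ with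 $1\le\nu<n_\mathrm{d}$, and that $\{u^\mathrm{m}_k\}$ is persistently exciting of order $L+\bar n$. Then: (i) $\operatorname{rank}\begin{bmatrix}\mathcal{H}_{0,1,N+\bar n}(\bar x^\mathrm{m})\\ \mathcal{H}_{0,L,N+\bar n}(u^\mathrm{m})\end{bmatrix}=Ln_\mathrm{u}+n_\mathrm{x}+\nu$; (ii) for every $x_0\in\mathbb{R}^{n_\mathrm{x}}$, every $d_0$ in the column space of $\mathcal{K}_\mathrm{d}$, and every $u_{[0,L-1]}\in\mathbb{R}^{Ln_\mathrm{u}}$, with $\bar x_0=[x_0^\top\ d_0^\top]^\top$, there exists $g\in\mathbb{R}^{N+\bar n}$ such that $$\begin{bmatrix}\mathcal{H}_{0,1,N+\bar n}(\bar x^\mathrm{m})\\ \mathcal{H}_{0,L,N+\bar n}(u^\mathrm{m})\end{bmatrix}g=\begin{bmatrix}\bar x_0\\ u_{[0,L-1]}\end{bmatrix};$$ (iii) for every $L$-long input-output trajectory $(u_{[0,L-1]},y_{[0,L-1]})$ of the system whose initial state $\bar x_0=[x_0^\top\ d_0^\top]^\top$ has $d_0$ in the column space of $\mathcal{K}_\mathrm{d}$, there exists $g\in\mathbb{R}^{N+\bar n}$ such that $$\begin{bmatrix}\mathcal{H}_{0,L,N+\bar n}(u^\mathrm{m})\\ \mathcal{H}_{0,L,N+\bar n}(y^\mathrm{m})\end{bmatrix}g=\begin{bmatrix}u_{[0,L-1]}\\ y_{[0,L-1]}\end{bmatrix}.$$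
   Context: For a sequence $\{w_k\}$ and integers $i$, $s\ge1$, $N\ge1$, the block-Hankel matrix $\mathcal{H}_{i,s,N}(w)$ is the matrix with $s$ block rows and $N$ columns whose $(a,b)$ block entry is $w_{i+a+b-2}$ (first row $[w_i\ \cdots\ w_{i+N-1}]$, last row $[w_{i+s-1}\ \cdots\ w_{i+N+s-2}]$). A sequence $\{w_k\}_{k=i}^{i+N+s-2}$ is persistently exciting of order $s$ if $\mathcal{H}_{i,s,N}(w)$ has full row rank. The stacked vector $u_{[k_1,k_2]}:=[u_{k_1}^\top\ u_{k_1+1}^\top\ \cdots\ u_{k_2}^\top]^\top$, and similarly for $y$. A pair $(A,B)$ with $A\in\mathbb{R}^{q\times q}$ is controllable if $[B\ AB\ \cdots\ A^{q-1}B]$ has rank $q$. *)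

theory Defs
  imports "Jordan_Normal_Form.DL_Rank"
begin

definition mrank :: "real mat \<Rightarrow> nat" where
  "mrank M = vec_space.rank (dim_row M) M"

definition colspace :: "real mat \<Rightarrow> real vec set" where
  "colspace M = {M *\<^sub>v g | g. g \<in> carrier_vec (dim_col M)}"

definition hcat :: "real mat \<Rightarrow> real mat \<Rightarrow> real mat" where
  "hcat A B = four_block_mat A B (0\<^sub>m 0 (dim_col A)) (0\<^sub>m 0 (dim_col B))"

text \<open>Block-Hankel matrix H_{i,s,N}(w) for a sequence w of vectors of dimension p:
  s block rows (each of p scalar rows) and N columns; block (a,b) (0-based) is w (i+a+b).\<close>
definition block_hankel :: "nat \<Rightarrow> nat \<Rightarrow> nat \<Rightarrow> nat \<Rightarrow> (nat \<Rightarrow> real vec) \<Rightarrow> real mat" where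
  "block_hankel p i s N w = mat (s * p) N (\<lambda>(r, c). w (i + r div p + c) $ (r mod p))"

definition pers_exc :: "nat \<Rightarrow> nat \<Rightarrow> nat \<Rightarrow> nat \<Rightarrow> (nat \<Rightarrow> real vec) \<Rightarrow> bool" where
  "pers_exc p i s N w \<longleftrightarrow> mrank (block_hankel p i s N w) = s * p"

definition stack :: "nat \<Rightarrow> nat \<Rightarrow> nat \<Rightarrow> (nat \<Rightarrow> real vec) \<Rightarrow> real vec" where
  "stack p k1 len w = vec (len * p) (\<lambda>r. w (k1 + r div p) $ (r mod p))"

text \<open>Controllability matrix [B AB ... A^(q-1) B] for A q x q and B with m columns.\<close>
definition ctrb_mat :: "real mat \<Rightarrow> real mat \<Rightarrow> real mat" where
  "ctrb_mat A B = mat (dim_row A) (dim_row A * dim_col B)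
     (\<lambda>(r, c). (A ^\<^sub>m (c div dim_col B) * B) $$ (r, c mod dim_col B))"

definition controllable :: "real mat \<Rightarrow> real mat \<Rightarrow> bool" where
  "controllable A B \<longleftrightarrow> mrank (ctrb_mat A B) = dim_row A"

end

theory Submission
  imports Defs "Jordan_Normal_Form.Gram_Schmidt"
begin

text \<open>Let \<open>H\<close> be the data matrix of (i), with block rows \<open>Hx\<close> (states) and \<open>Hu\<close> (depth-\<open>L\<close>
  inputs). If \<open>(\<xi>, \<eta>)\<close> annihilates the columns of \<open>H\<close>, expand the state \<open>i\<close> steps ahead and
  eliminate it with a Krylov relation \<open>\<Sum>i\<le>r. \<alpha> i \<cdot> (AL\<^sup>T)\<^sup>i \<xi> = 0\<close>, \<open>r \<le> nbar\<close>: what remains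
  is a window of \<open>L + nbar\<close> input weights annihilating the persistently exciting input, hence zero,
  and back substitution gives \<open>\<eta> = 0\<close> and \<open>\<xi>\<^sup>T AL\<^sup>k BL = 0\<close> for all \<open>k\<close>. By controllability the
  \<open>x\<close>-part of \<open>\<xi>\<close> vanishes, and since the disturbance evolves autonomously, \<open>d c = Ad\<^sup>c d 0\<close>,
  the \<open>d\<close>-part is orthogonal to the columns of \<open>Kd\<close>. By the Fredholm alternative the column
  space of \<open>H\<close> is \<open>\<real>^nx \<times> colspace Kd \<times> \<real>^(L * nu)\<close>, which is (ii) and, via a basis of
  \<open>colspace Kd\<close>, the rank formula (i). For (iii), the weights realising the initial state and the
  inputs combine the shifted data trajectories, outputs included, into the given trajectory by
  linearity.\<close>

section \<open>Column spaces and ranks of real matrices\<close>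

lemma scalar_prod_self_eq_0_real:
  fixes v :: "real vec"
  assumes "v \<in> carrier_vec n" and "v \<bullet> v = 0"
  shows "v = 0\<^sub>v n"
  using conjugate_square_eq_0_vec[OF assms(1)] assms(2) by simp

lemma zero_mat_mult_vec[simp]: "v \<in> carrier_vec m \<Longrightarrow> 0\<^sub>m n m *\<^sub>v v = (0\<^sub>v n :: 'a :: semiring_0 vec)"
  by (intro eq_vecI) auto

lemma mult_mat_vec_zero[simp]: "A \<in> carrier_mat n m \<Longrightarrow> A *\<^sub>v 0\<^sub>v m = (0\<^sub>v n :: 'a :: semiring_0 vec)"
  by (intro eq_vecI) auto

lemma vec_last_append: "y \<in> carrier_vec m \<Longrightarrow> vec_last (x @\<^sub>v y) m = y"
  unfolding vec_last_def by (intro eq_vecI) auto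

lemma scalar_prod_split:
  assumes "v \<in> carrier_vec (n1 + n2)" "w \<in> carrier_vec (n1 + n2)"
  shows "v \<bullet> w = vec_first v n1 \<bullet> vec_first w n1 + vec_last v n2 \<bullet> vec_last w n2"
proof -
  have "v \<bullet> w = (vec_first v n1 @\<^sub>v vec_last v n2) \<bullet> (vec_first w n1 @\<^sub>v vec_last w n2)"
    using assms by simp
  also have "\<dots> = vec_first v n1 \<bullet> vec_first w n1 + vec_last v n2 \<bullet> vec_last w n2"
    by (rule scalar_prod_append[of _ n1 _ n2]) auto
  finally show ?thesis .
qed

lemma col_append_rows:
  "P \<in> carrier_mat n1 k \<Longrightarrow> Q \<in> carrier_mat n2 k \<Longrightarrow> c < k \<Longrightarrow> col (P @\<^sub>r Q) c = col P c @\<^sub>v col Q c"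
  unfolding append_rows_def by (intro eq_vecI) auto

lemma colspace_eq_col_space:
  fixes A :: "real mat"
  assumes "A \<in> carrier_mat n k"
  shows "colspace A = vec_space.col_space n A"
proof -
  interpret vec_space "TYPE(real)" n .
  show ?thesis unfolding colspace_def col_space_eq[OF assms] using assms by auto
qed

lemma mult_mat_vec_in_colspace:
  "A \<in> carrier_mat n k \<Longrightarrow> g \<in> carrier_vec k \<Longrightarrow> A *\<^sub>v g \<in> colspace A"
  unfolding colspace_def by auto

lemma colspaceE:
  assumes "v \<in> colspace A" and "A \<in> carrier_mat n k"
  obtains g where "g \<in> carrier_vec k" "v = A *\<^sub>v g"
  using assms unfolding colspace_def by auto

lemma rank_le_dim_row:
  fixes A :: "real mat"
  assumes A: "A \<in> carrier_mat n k"
  shows "vec_space.rank n A \<le> n"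
proof -
  interpret vec_space "TYPE(real)" n .
  have "set (cols A) \<subseteq> carrier_vec n" using A cols_dim by blast
  then have "subspace class_ring (span (set (cols A))) V" by (rule span_is_subspace)
  from subspace_dim[OF this fin_dim fin_dim_span_cols[OF A]]
  show ?thesis unfolding rank_def dim_is_n .
qed

lemma rank_eq_dim_col_if_kernel_trivial:
  fixes A :: "real mat"
  assumes A: "A \<in> carrier_mat n k"
    and ker: "\<And>v. v \<in> carrier_vec k \<Longrightarrow> A *\<^sub>v v = 0\<^sub>v n \<Longrightarrow> v = 0\<^sub>v k"
  shows "vec_space.rank n A = k"
proof -
  interpret vec_space "TYPE(real)" n .
  have distinct: "distinct (cols A)"
  proof (rule ccontr)
    assume "\<not> distinct (cols A)"
    then obtain i j where ij: "i < k" "j < k" "i \<noteq> j" "col A i = col A j"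
      using A by (auto simp: distinct_conv_nth)
    let ?v = "unit_vec k i - unit_vec k j :: real vec"
    have unit: "A *\<^sub>v unit_vec k l = col A l" if "l < k" for l
      using A that by (intro eq_vecI) auto
    have "A *\<^sub>v ?v = col A i - col A j"
      using A ij by (simp add: mult_minus_distrib_mat_vec unit)
    with ij A have "A *\<^sub>v ?v = 0\<^sub>v n" by auto
    then have "?v = 0\<^sub>v k" by (intro ker) auto
    then have "?v $ i = 0" using ij by simp
    then show False using ij by simp
  qed
  have "\<not> lin_dep (set (cols A))"
  proof
    assume "lin_dep (set (cols A))"
    from lin_depE[OF A this distinct] obtain v
      where "v \<in> carrier_vec k" "v \<noteq> 0\<^sub>v k" "A *\<^sub>v v = 0\<^sub>v n" .
    then show False using ker by auto
  qed
  then show ?thesis using lin_indpt_full_rank[OF A distinct] by blast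
qed

lemma exists_nonzero_kernel_vec:
  fixes A :: "real mat"
  assumes "A \<in> carrier_mat n k" and "n < k"
  obtains v where "v \<in> carrier_vec k" "v \<noteq> 0\<^sub>v k" "A *\<^sub>v v = 0\<^sub>v n"
proof -
  have "vec_space.rank n A \<noteq> k" using rank_le_dim_row[OF assms(1)] assms(2) by simp
  then show ?thesis using rank_eq_dim_col_if_kernel_trivial[OF assms(1)] that by blast
qed

lemma (in vec_space) indpt_subset_spanning_cols:
  assumes A: "A \<in> carrier_mat n k"
  obtains S where "S \<subseteq> set (cols A)" "lin_indpt S" "span S = span (set (cols A))"
    "card S = rank A"
proof -
  let ?P = "\<lambda>T. T \<subseteq> set (cols A) \<and> lin_indpt T"
  have cols: "set (cols A) \<subseteq> carrier_vec n" using A cols_dim by blast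
  have empty: "\<not> lin_dep {}" by (simp add: lin_dep_def)
  have "\<exists>S. finite S \<and> maximal S ?P"
    by (rule maximal_exists[of ?P "card (set (cols A))" "{}"])
      (auto intro: card_mono rev_finite_subset simp: empty)
  then obtain S where max: "maximal S ?P" by blast
  then have S: "S \<subseteq> set (cols A)" "lin_indpt S" unfolding maximal_def by auto
  have SC: "S \<subseteq> carrier_vec n" using S cols by blast
  have span_S: "set (cols A) \<subseteq> span S"
  proof
    fix x assume x: "x \<in> set (cols A)"
    show "x \<in> span S"
    proof (rule ccontr)
      assume x_span: "x \<notin> span S"
      then have x_S: "x \<notin> S" using in_own_span[OF SC] by blast
      have "x \<in> carrier_vec n" using x cols by blast
      then have "lin_indpt (S \<union> {x})"
        using lin_dep_iff_in_span[OF SC S(2) _ x_S] x_span by simp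
      then have "S \<union> {x} = S" using max x S(1) unfolding maximal_def by blast
      then show False using x_S by blast
    qed
  qed
  have "span S = span (set (cols A))"
  proof
    show "span S \<subseteq> span (set (cols A))" using span_is_monotone[OF S(1)] .
    show "span (set (cols A)) \<subseteq> span S"
      using span_is_subset[OF span_S span_is_submodule[OF SC]] .
  qed
  from that[OF S this] show ?thesis using rank_card_indpt[OF A max] by simp
qed

lemma colspace_eq_carrier_if_full_rank:
  fixes A :: "real mat"
  assumes A: "A \<in> carrier_mat n k" and rank: "vec_space.rank n A = n"
  shows "colspace A = carrier_vec n"
proof -
  interpret vec_space "TYPE(real)" n .
  obtain S where S: "S \<subseteq> set (cols A)" "lin_indpt S" "span S = span (set (cols A))"
    "card S = rank A"
    by (rule indpt_subset_spanning_cols[OF A])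
  have SC: "S \<subseteq> carrier_vec n" using S(1) A cols_dim by blast
  have "basis S"
    using dim_li_is_basis[OF fin_dim _ SC S(2)] S(1,4) rank dim_is_n
    by (simp add: finite_subset)
  then have "span S = carrier_vec n" unfolding basis_def by simp
  then show ?thesis using S(3) colspace_eq_col_space[OF A] unfolding col_space_def by simp
qed

lemma orthogonal_colspace:
  fixes K :: "real mat"
  assumes K: "K \<in> carrier_mat n k" and w: "w \<in> carrier_vec n"
    and orth: "\<And>c. c < k \<Longrightarrow> w \<bullet> col K c = 0" and v: "v \<in> colspace K"
  shows "w \<bullet> v = 0"
proof -
  obtain g where g: "g \<in> carrier_vec k" "v = K *\<^sub>v g" using colspaceE[OF v K] .
  have "transpose_mat K *\<^sub>v w = 0\<^sub>v k"
  proof (rule eq_vecI)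
    fix c assume "c < dim_vec (0\<^sub>v k :: real vec)"
    then have c: "c < k" by simp
    then have "(transpose_mat K *\<^sub>v w) $ c = col K c \<bullet> w" using K by simp
    also have "\<dots> = w \<bullet> col K c" using K w by (intro comm_scalar_prod[of _ n]) auto
    finally show "(transpose_mat K *\<^sub>v w) $ c = 0\<^sub>v k $ c" using orth c by simp
  qed (use K in simp)
  then show ?thesis using transpose_vec_mult_scalar[OF K g(1) w] g by simp
qed

lemma eq_0_if_orthogonal_cols_full_rank:
  fixes M :: "real mat"
  assumes M: "M \<in> carrier_mat n k" and rank: "vec_space.rank n M = n"
    and w: "w \<in> carrier_vec n" and orth: "\<And>c. c < k \<Longrightarrow> w \<bullet> col M c = 0"
  shows "w = 0\<^sub>v n"
proof -
  have "w \<in> colspace M" using colspace_eq_carrier_if_full_rank[OF M rank] w by simp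
  then have "w \<bullet> w = 0" using orthogonal_colspace[OF M w orth] by simp
  then show ?thesis using scalar_prod_self_eq_0_real[OF w] by blast
qed

context
  fixes n :: nat
begin

interpretation cof_vec_space n "TYPE(real)" .

lemma gram_schmidt_residual:
  fixes b :: "real vec"
  assumes us: "set us \<subseteq> carrier_vec n" "corthogonal us" "distinct us"
    and b: "b \<in> carrier_vec n" and b_span: "b \<notin> span (set us)"
  shows "\<exists>v \<in> carrier_vec n. (\<forall>y \<in> span (set us). v \<bullet> y = 0) \<and> v \<bullet> b \<noteq> 0"
proof -
  define v where "v = adjuster n b us + b"
  have adj: "adjuster n b us \<in> carrier_vec n" using us b by auto
  have vC: "v \<in> carrier_vec n" unfolding v_def using adj b by auto
  have "v \<in> orthogonal_complement (set us)"
    unfolding orthogonal_complement_def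
  proof (intro CollectI conjI ballI)
    fix y assume "y \<in> set us"
    then obtain i where i: "i < length us" "y = us ! i" by (auto simp: in_set_conv_nth)
    have "v \<bullet>c us ! i = 0" unfolding v_def using adjust_zero[OF us(1,2) b i(1)] .
    then show "v \<bullet> y = 0" using i by (simp add: scalar_prod_def)
  qed (rule vC)
  then have "v \<in> orthogonal_complement (span (set us))" using us(1) by simp
  then have v_orth: "\<forall>y \<in> span (set us). v \<bullet> y = 0"
    unfolding orthogonal_complement_def by blast
  have "v \<bullet> adjuster n b us = 0"
    using v_orth adjuster_in_span[OF b us(1,3)] by blast
  then have "v \<bullet> b = v \<bullet> v"
    unfolding v_def using scalar_prod_add_distrib[OF _ adj b] vC v_def by simp
  moreover have "v \<noteq> 0\<^sub>v n" using adjust_nonzero[OF us(1,3) b b_span] unfolding v_def by simp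
  ultimately have "v \<bullet> b \<noteq> 0" using scalar_prod_self_eq_0_real[OF vC] by metis
  then show ?thesis using vC v_orth by blast
qed

text \<open>If \<open>b\<close> were outside the column space, its Gram--Schmidt residual against an orthogonal
  basis of the column space would be a left-kernel vector not orthogonal to \<open>b\<close>.\<close>
lemma fredholm_alternative:
  fixes A :: "real mat"
  assumes A: "A \<in> carrier_mat n k" and b: "b \<in> carrier_vec n"
    and orth: "\<And>w. w \<in> carrier_vec n \<Longrightarrow> (\<forall>c < k. w \<bullet> col A c = 0) \<Longrightarrow> w \<bullet> b = 0"
  shows "b \<in> colspace A"
proof -
  obtain S where S: "S \<subseteq> set (cols A)" "lin_indpt S" "span S = span (set (cols A))"
    by (rule indpt_subset_spanning_cols[OF A])
  obtain ws where ws: "set ws = S" "distinct ws"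
    using finite_distinct_list[OF finite_subset[OF S(1)]] by blast
  have wsC: "set ws \<subseteq> carrier_vec n" using ws S(1) A cols_dim by blast
  define us where "us = gram_schmidt n ws"
  have us: "span (set ws) = span (set us)" "corthogonal us" "set us \<subseteq> carrier_vec n" "distinct us"
    using gram_schmidt_result[OF wsC ws(2) _ us_def] S(2) ws(1) by auto
  have span_us: "span (set us) = span (set (cols A))" using us(1) ws(1) S(3) by simp
  have "b \<in> span (set us)"
  proof (rule ccontr)
    assume "b \<notin> span (set us)"
    then obtain v where v: "v \<in> carrier_vec n" "\<forall>y \<in> span (set us). v \<bullet> y = 0" "v \<bullet> b \<noteq> 0"
      using gram_schmidt_residual[OF us(3,2,4) b] by blast
    have "col A c \<in> span (set us)" if "c < k" for c
    proof -
      have "col A c \<in> set (cols A)" using that A by (simp add: cols_def)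
      moreover have "set (cols A) \<subseteq> carrier_vec n" using A cols_dim by blast
      ultimately show ?thesis using span_us in_own_span by blast
    qed
    then show False using orth[OF v(1)] v(2,3) by blast
  qed
  then show ?thesis using span_us colspace_eq_col_space[OF A] unfolding col_space_def by simp
qed

end

lemma exists_injective_basis_mat:
  fixes K :: "real mat"
  assumes K: "K \<in> carrier_mat n k"
  obtains Kb where "Kb \<in> carrier_mat n (vec_space.rank n K)" "colspace Kb = colspace K"
    "\<And>v. v \<in> carrier_vec (vec_space.rank n K) \<Longrightarrow> Kb *\<^sub>v v = 0\<^sub>v n \<Longrightarrow> v = 0\<^sub>v (vec_space.rank n K)"
proof -
  interpret vec_space "TYPE(real)" n .
  obtain S where S: "S \<subseteq> set (cols K)" "lin_indpt S" "span S = span (set (cols K))"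
    "card S = rank K"
    by (rule indpt_subset_spanning_cols[OF K])
  obtain ws where ws: "set ws = S" "distinct ws"
    using finite_distinct_list[OF finite_subset[OF S(1)]] by blast
  have wsC: "set ws \<subseteq> carrier_vec n" using ws S(1) K cols_dim by blast
  define Kb where "Kb = mat_of_cols n ws"
  have Kb: "Kb \<in> carrier_mat n (rank K)"
    unfolding Kb_def using S(4) ws distinct_card by fastforce
  have cols_Kb: "cols Kb = ws" unfolding Kb_def using wsC by simp
  have "colspace Kb = colspace K"
    using S(3) ws(1) cols_Kb unfolding colspace_eq_col_space[OF Kb] colspace_eq_col_space[OF K]
      col_space_def by simp
  moreover have "v = 0\<^sub>v (rank K)" if v: "v \<in> carrier_vec (rank K)" "Kb *\<^sub>v v = 0\<^sub>v n" for v
  proof (rule ccontr)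
    assume "v \<noteq> 0\<^sub>v (rank K)"
    from lin_depI[OF Kb v(1) this v(2)] have "lin_dep (set (cols Kb))" using cols_Kb ws(2) by simp
    then show False using S(2) cols_Kb ws(1) by simp
  qed
  ultimately show ?thesis by (rule that[OF Kb])
qed

lemma rank_eq_if_colspace_eq:
  fixes P Q :: "real mat"
  assumes P: "P \<in> carrier_mat n k1" and Q: "Q \<in> carrier_mat n k2"
    and eq: "colspace P = colspace Q"
  shows "vec_space.rank n P = vec_space.rank n Q"
proof -
  interpret vec_space "TYPE(real)" n .
  have "span (set (cols P)) = span (set (cols Q))"
    using eq unfolding colspace_eq_col_space[OF P] colspace_eq_col_space[OF Q] col_space_def .
  then show ?thesis unfolding rank_def by simp
qed

lemma colspace_one_mat: "colspace (1\<^sub>m n) = carrier_vec n"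
  unfolding colspace_def by force

lemma zero_append_zero_vec: "0\<^sub>v n @\<^sub>v 0\<^sub>v m = (0\<^sub>v (n + m) :: 'a :: zero vec)"
  by (intro eq_vecI) auto

lemma four_block_diag_mult_vec:
  fixes P Q :: "real mat"
  assumes "P \<in> carrier_mat n1 k1" "Q \<in> carrier_mat n2 k2"
    "x \<in> carrier_vec k1" "y \<in> carrier_vec k2"
  shows "four_block_mat P (0\<^sub>m n1 k2) (0\<^sub>m n2 k1) Q *\<^sub>v (x @\<^sub>v y) = (P *\<^sub>v x) @\<^sub>v (Q *\<^sub>v y)"
  using assms by (subst four_block_mat_mult_vec[of _ n1 k1 _ k2 _ n2]) auto

lemma colspace_four_block_diag:
  fixes P Q :: "real mat"
  assumes P: "P \<in> carrier_mat n1 k1" and Q: "Q \<in> carrier_mat n2 k2"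
  shows "colspace (four_block_mat P (0\<^sub>m n1 k2) (0\<^sub>m n2 k1) Q)
    = {x @\<^sub>v y | x y. x \<in> colspace P \<and> y \<in> colspace Q}"
    (is "colspace ?M = ?S")
proof (intro equalityI subsetI)
  have M: "?M \<in> carrier_mat (n1 + n2) (k1 + k2)" using P Q by auto
  fix v assume "v \<in> colspace ?M"
  then obtain g where g: "g \<in> carrier_vec (k1 + k2)" "v = ?M *\<^sub>v g"
    by (rule colspaceE[OF _ M])
  let ?x = "vec_first g k1" and ?y = "vec_last g k2"
  have "v = ?M *\<^sub>v (?x @\<^sub>v ?y)" using g by simp
  also have "\<dots> = (P *\<^sub>v ?x) @\<^sub>v (Q *\<^sub>v ?y)" by (rule four_block_diag_mult_vec[OF P Q]) auto
  finally show "v \<in> ?S"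
    using mult_mat_vec_in_colspace[OF P vec_first_carrier] mult_mat_vec_in_colspace[OF Q vec_last_carrier]
    by blast
next
  have M: "?M \<in> carrier_mat (n1 + n2) (k1 + k2)" using P Q by auto
  fix v assume "v \<in> ?S"
  then obtain x y where v: "v = x @\<^sub>v y" "x \<in> colspace P" "y \<in> colspace Q" by blast
  obtain gx where gx: "gx \<in> carrier_vec k1" "x = P *\<^sub>v gx" by (rule colspaceE[OF v(2) P])
  obtain gy where gy: "gy \<in> carrier_vec k2" "y = Q *\<^sub>v gy" by (rule colspaceE[OF v(3) Q])
  have "v = ?M *\<^sub>v (gx @\<^sub>v gy)" using v(1) gx gy four_block_diag_mult_vec[OF P Q] by simp
  then show "v \<in> colspace ?M" using mult_mat_vec_in_colspace[OF M] gx gy by simp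
qed

lemma four_block_diag_kernel_trivial:
  fixes P Q :: "real mat"
  assumes P: "P \<in> carrier_mat n1 k1" and Q: "Q \<in> carrier_mat n2 k2"
    and P_ker: "\<And>x. x \<in> carrier_vec k1 \<Longrightarrow> P *\<^sub>v x = 0\<^sub>v n1 \<Longrightarrow> x = 0\<^sub>v k1"
    and Q_ker: "\<And>y. y \<in> carrier_vec k2 \<Longrightarrow> Q *\<^sub>v y = 0\<^sub>v n2 \<Longrightarrow> y = 0\<^sub>v k2"
    and g: "g \<in> carrier_vec (k1 + k2)"
    and zero: "four_block_mat P (0\<^sub>m n1 k2) (0\<^sub>m n2 k1) Q *\<^sub>v g = 0\<^sub>v (n1 + n2)"
  shows "g = 0\<^sub>v (k1 + k2)"
proof -
  let ?x = "vec_first g k1" and ?y = "vec_last g k2"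
  have "(P *\<^sub>v ?x) @\<^sub>v (Q *\<^sub>v ?y) = 0\<^sub>v n1 @\<^sub>v 0\<^sub>v n2"
    using zero g four_block_diag_mult_vec[OF P Q, of ?x ?y] by (simp add: zero_append_zero_vec)
  then have "P *\<^sub>v ?x = 0\<^sub>v n1" "Q *\<^sub>v ?y = 0\<^sub>v n2"
    using append_vec_eq[of "P *\<^sub>v ?x" n1 "0\<^sub>v n1"] P by auto
  then have "?x = 0\<^sub>v k1" "?y = 0\<^sub>v k2" using P_ker Q_ker by auto
  then have "g = 0\<^sub>v k1 @\<^sub>v 0\<^sub>v k2" using vec_first_last_append[OF g] by simp
  then show ?thesis by (simp add: zero_append_zero_vec)
qed

section \<open>Linear combinations and Krylov sequences\<close>

definition vec_lincomb :: "nat \<Rightarrow> nat \<Rightarrow> (nat \<Rightarrow> real) \<Rightarrow> (nat \<Rightarrow> real vec) \<Rightarrow> real vec" where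
  "vec_lincomb n r a f = vec n (\<lambda>i. \<Sum>j<r. a j * f j $ i)"

lemma vec_lincomb_carrier[simp]: "vec_lincomb n r a f \<in> carrier_vec n"
  and dim_vec_lincomb[simp]: "dim_vec (vec_lincomb n r a f) = n"
  and index_vec_lincomb[simp]: "i < n \<Longrightarrow> vec_lincomb n r a f $ i = (\<Sum>j<r. a j * f j $ i)"
  unfolding vec_lincomb_def by auto

lemma vec_lincomb_cong:
  "(\<And>j. j < r \<Longrightarrow> a j = b j) \<Longrightarrow> (\<And>j. j < r \<Longrightarrow> f j = g j) \<Longrightarrow>
    vec_lincomb n r a f = vec_lincomb n r b g"
  unfolding vec_lincomb_def by (intro eq_vecI) auto

lemma vec_lincomb_pad:
  assumes "r \<le> s"
  shows "vec_lincomb n s (\<lambda>j. if j < r then a j else 0) f = vec_lincomb n r a f"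
proof (rule eq_vecI)
  fix i assume "i < dim_vec (vec_lincomb n r a f)"
  then have "i < n" by simp
  moreover have "{j \<in> {..<s}. j < r} = {..<r}" using assms by auto
  ultimately show "vec_lincomb n s (\<lambda>j. if j < r then a j else 0) f $ i = vec_lincomb n r a f $ i"
    by (simp add: if_distrib[of "\<lambda>x. x * _"] sum.inter_filter[symmetric] cong: if_cong)
qed simp

lemma mult_mat_vec_lincomb:
  assumes P: "P \<in> carrier_mat n m" and f: "\<And>j. j < r \<Longrightarrow> f j \<in> carrier_vec m"
  shows "P *\<^sub>v vec_lincomb m r a f = vec_lincomb n r a (\<lambda>j. P *\<^sub>v f j)"
proof (rule eq_vecI)
  fix i assume "i < dim_vec (vec_lincomb n r a (\<lambda>j. P *\<^sub>v f j))"
  then have i: "i < n" by simp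
  have "(P *\<^sub>v vec_lincomb m r a f) $ i = (\<Sum>s<m. P $$ (i, s) * (\<Sum>j<r. a j * f j $ s))"
    using P i by (simp add: scalar_prod_def lessThan_atLeast0)
  also have "\<dots> = (\<Sum>j<r. a j * (\<Sum>s<m. P $$ (i, s) * f j $ s))"
    by (simp add: sum_distrib_left sum.swap[of _ "{..<m}"] mult_ac)
  also have "\<dots> = vec_lincomb n r a (\<lambda>j. P *\<^sub>v f j) $ i"
  proof -
    have "(P *\<^sub>v f j) $ i = (\<Sum>s<m. P $$ (i, s) * f j $ s)" if "j < r" for j
      using P i f[OF that] by (simp add: scalar_prod_def lessThan_atLeast0)
    then show ?thesis using i by simp
  qed
  finally show "(P *\<^sub>v vec_lincomb m r a f) $ i = vec_lincomb n r a (\<lambda>j. P *\<^sub>v f j) $ i" .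
qed (use P in simp)

lemma vec_lincomb_scalar_prod:
  assumes "w \<in> carrier_vec n"
  shows "vec_lincomb n r a f \<bullet> w = (\<Sum>j<r. a j * (f j \<bullet> w))"
proof -
  have "vec_lincomb n r a f \<bullet> w = (\<Sum>i<n. \<Sum>j<r. a j * (f j $ i * w $ i))"
    using assms by (simp add: scalar_prod_def lessThan_atLeast0 sum_distrib_right mult.assoc)
  also have "\<dots> = (\<Sum>j<r. a j * (f j \<bullet> w))"
    using assms by (subst sum.swap) (simp add: scalar_prod_def lessThan_atLeast0 sum_distrib_left)
  finally show ?thesis .
qed

lemma vec_lincomb_in_colspace:
  assumes K: "K \<in> carrier_mat n k" and f: "\<And>j. j < r \<Longrightarrow> f j \<in> colspace K"
  shows "vec_lincomb n r a f \<in> colspace K"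
proof -
  have "\<forall>j \<in> {..<r}. \<exists>h. h \<in> carrier_vec k \<and> f j = K *\<^sub>v h"
    using f K by (auto simp: colspace_def)
  from bchoice[OF this] obtain h where h: "\<forall>j \<in> {..<r}. h j \<in> carrier_vec k \<and> f j = K *\<^sub>v h j"
    by blast
  then have "vec_lincomb n r a f = vec_lincomb n r a (\<lambda>j. K *\<^sub>v h j)"
    by (intro vec_lincomb_cong) simp_all
  also have "\<dots> = K *\<^sub>v vec_lincomb k r a h"
    using mult_mat_vec_lincomb[OF K, of r h] h by simp
  finally have "vec_lincomb n r a f = K *\<^sub>v vec_lincomb k r a h" .
  then show ?thesis using mult_mat_vec_in_colspace[OF K] by simp
qed

lemma vec_last_vec_lincomb:
  assumes "\<And>j. j < r \<Longrightarrow> f j \<in> carrier_vec (n1 + n2)"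
  shows "vec_last (vec_lincomb (n1 + n2) r a f) n2 = vec_lincomb n2 r a (\<lambda>j. vec_last (f j) n2)"
proof -
  have "dim_vec (f j) = n1 + n2" if "j < r" for j using assms[OF that] by simp
  then show ?thesis unfolding vec_last_def by (intro eq_vecI) (auto intro!: sum.cong)
qed

lemma pow_mat_Suc_left:
  assumes "F \<in> carrier_mat m m"
  shows "F ^\<^sub>m Suc k = F * F ^\<^sub>m k"
proof (induction k)
  case (Suc k)
  have "F ^\<^sub>m Suc (Suc k) = (F * F ^\<^sub>m k) * F" using Suc by simp
  also have "\<dots> = F * (F ^\<^sub>m k * F)" using assms by (simp add: assoc_mult_mat[of _ m m _ m _ m])
  finally show ?case by simp
qed (use assms in simp)

lemma pow_mat_Suc_mult_vec:
  assumes "F \<in> carrier_mat m m" and "v \<in> carrier_vec m"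
  shows "F ^\<^sub>m Suc k *\<^sub>v v = F *\<^sub>v (F ^\<^sub>m k *\<^sub>v v)"
  unfolding pow_mat_Suc_left[OF assms(1)] using assms by (intro assoc_mult_mat_vec) auto

definition krylov_mat :: "real mat \<Rightarrow> real vec \<Rightarrow> nat \<Rightarrow> real mat" where
  "krylov_mat F v k = mat (dim_vec v) k (\<lambda>(i, j). (F ^\<^sub>m j *\<^sub>v v) $ i)"

lemma krylov_mat_carrier: "v \<in> carrier_vec m \<Longrightarrow> krylov_mat F v k \<in> carrier_mat m k"
  unfolding krylov_mat_def by simp

lemma krylov_mat_mult_vec:
  assumes "F \<in> carrier_mat m m" "v \<in> carrier_vec m" "g \<in> carrier_vec k"
  shows "krylov_mat F v k *\<^sub>v g = vec_lincomb m k (\<lambda>j. g $ j) (\<lambda>j. F ^\<^sub>m j *\<^sub>v v)"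
  using assms by (intro eq_vecI)
    (auto simp: krylov_mat_def scalar_prod_def lessThan_atLeast0 mult.commute intro!: sum.cong)

lemma col_krylov_mat: "c < k \<Longrightarrow> F \<in> carrier_mat m m \<Longrightarrow> v \<in> carrier_vec m \<Longrightarrow>
  col (krylov_mat F v k) c = F ^\<^sub>m c *\<^sub>v v"
  unfolding krylov_mat_def by (intro eq_vecI) auto

text \<open>The first power of \<open>F\<close> (at most the dimension) that falls into the span of the earlier
  ones is read off the last nonzero entry of a kernel vector of the \<open>m \<times> (m + 1)\<close> Krylov matrix.\<close>
lemma krylov_dependence:
  assumes F: "F \<in> carrier_mat m m" and v: "v \<in> carrier_vec m"
  shows "\<exists>r \<le> m. \<exists>\<beta>. F ^\<^sub>m r *\<^sub>v v = vec_lincomb m r \<beta> (\<lambda>j. F ^\<^sub>m j *\<^sub>v v)"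
proof -
  have K: "krylov_mat F v (Suc m) \<in> carrier_mat m (Suc m)" using krylov_mat_carrier[OF v] .
  obtain w where w: "w \<in> carrier_vec (Suc m)" "w \<noteq> 0\<^sub>v (Suc m)"
    "krylov_mat F v (Suc m) *\<^sub>v w = 0\<^sub>v m"
    by (rule exists_nonzero_kernel_vec[OF K]) simp
  define J where "J = {j. j < Suc m \<and> w $ j \<noteq> 0}"
  have "J \<noteq> {}" using w(1,2) unfolding J_def by (auto intro!: eq_vecI)
  moreover have "finite J" unfolding J_def by simp
  ultimately have "Max J \<in> J" by simp
  define r where "r = Max J"
  have r: "r \<le> m" "w $ r \<noteq> 0" using \<open>Max J \<in> J\<close> unfolding r_def J_def by auto
  have above: "w $ j = 0" if "r < j" "j < Suc m" for j
    using that Max_ge[OF \<open>finite J\<close>, of j] unfolding r_def J_def by fastforce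
  define \<beta> where "\<beta> j = - w $ j / w $ r" for j
  have "F ^\<^sub>m r *\<^sub>v v = vec_lincomb m r \<beta> (\<lambda>j. F ^\<^sub>m j *\<^sub>v v)"
  proof (rule eq_vecI)
    fix i assume "i < dim_vec (vec_lincomb m r \<beta> (\<lambda>j. F ^\<^sub>m j *\<^sub>v v))"
    then have i: "i < m" by simp
    have "0 = (\<Sum>j<Suc m. w $ j * (F ^\<^sub>m j *\<^sub>v v) $ i)"
      using arg_cong[OF w(3), of "\<lambda>x. x $ i"] krylov_mat_mult_vec[OF F v w(1)] i by simp
    also have "\<dots> = (\<Sum>j<Suc r. w $ j * (F ^\<^sub>m j *\<^sub>v v) $ i)"
      by (rule sum.mono_neutral_right) (use r above in auto)
    finally have "w $ r * (F ^\<^sub>m r *\<^sub>v v) $ i = - (\<Sum>j<r. w $ j * (F ^\<^sub>m j *\<^sub>v v) $ i)"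
      by simp
    then have "(F ^\<^sub>m r *\<^sub>v v) $ i = - (\<Sum>j<r. w $ j * (F ^\<^sub>m j *\<^sub>v v) $ i) / w $ r"
      using r(2) by (simp add: field_simps)
    then show "(F ^\<^sub>m r *\<^sub>v v) $ i = vec_lincomb m r \<beta> (\<lambda>j. F ^\<^sub>m j *\<^sub>v v) $ i"
      using i by (simp add: \<beta>_def sum_divide_distrib sum_negf[symmetric] mult_ac)
  qed (use F v in simp)
  then show ?thesis using r(1) by blast
qed

lemma krylov_span_Suc:
  assumes F: "F \<in> carrier_mat m m" and v: "v \<in> carrier_vec m"
    and dep: "F ^\<^sub>m r *\<^sub>v v = vec_lincomb m r \<beta> (\<lambda>j. F ^\<^sub>m j *\<^sub>v v)"
    and a: "F ^\<^sub>m k *\<^sub>v v = vec_lincomb m r a (\<lambda>j. F ^\<^sub>m j *\<^sub>v v)"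
  shows "\<exists>a'. F ^\<^sub>m Suc k *\<^sub>v v = vec_lincomb m r a' (\<lambda>j. F ^\<^sub>m j *\<^sub>v v)"
proof -
  have "F ^\<^sub>m Suc k *\<^sub>v v = F *\<^sub>v vec_lincomb m r a (\<lambda>j. F ^\<^sub>m j *\<^sub>v v)"
    using a pow_mat_Suc_mult_vec[OF F v] by simp
  also have "\<dots> = vec_lincomb m r a (\<lambda>j. F *\<^sub>v (F ^\<^sub>m j *\<^sub>v v))"
    by (rule mult_mat_vec_lincomb[OF F]) (use mult_mat_vec_carrier[OF pow_carrier_mat[OF F] v] in blast)
  also have "\<dots> = vec_lincomb m r a (\<lambda>j. F ^\<^sub>m Suc j *\<^sub>v v)"
    by (intro vec_lincomb_cong refl pow_mat_Suc_mult_vec[OF F v, symmetric])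
  finally have shifted: "F ^\<^sub>m Suc k *\<^sub>v v = vec_lincomb m r a (\<lambda>j. F ^\<^sub>m Suc j *\<^sub>v v)" .
  show ?thesis
  proof (cases r)
    case 0
    with shifted show ?thesis by (auto simp: vec_lincomb_def)
  next
    case (Suc r')
    \<comment> \<open>shift the coefficients by one and replace the top power using \<open>dep\<close>\<close>
    define a' where "a' j = (if j = 0 then 0 else a (j - 1)) + a r' * \<beta> j" for j
    have "F ^\<^sub>m Suc k *\<^sub>v v = vec_lincomb m r a' (\<lambda>j. F ^\<^sub>m j *\<^sub>v v)"
    proof (rule eq_vecI)
      fix i assume "i < dim_vec (vec_lincomb m r a' (\<lambda>j. F ^\<^sub>m j *\<^sub>v v))"
      then have i: "i < m" by simp
      let ?p = "\<lambda>j. (F ^\<^sub>m j *\<^sub>v v) $ i"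
      have top: "?p r = (\<Sum>j<r. \<beta> j * ?p j)" using arg_cong[OF dep, of "\<lambda>x. x $ i"] i by simp
      have "(\<Sum>j<r. a j * ?p (Suc j)) = (\<Sum>j<r'. a j * ?p (Suc j)) + a r' * ?p r"
        using Suc by simp
      also have "(\<Sum>j<r'. a j * ?p (Suc j)) = (\<Sum>j<r. (if j = 0 then 0 else a (j - 1)) * ?p j)"
        unfolding Suc by (subst sum.lessThan_Suc_shift) simp
      finally have "(\<Sum>j<r. a j * ?p (Suc j)) = (\<Sum>j<r. a' j * ?p j)"
        unfolding top a'_def by (simp add: distrib_right sum.distrib sum_distrib_left mult.assoc)
      then show "(F ^\<^sub>m Suc k *\<^sub>v v) $ i = vec_lincomb m r a' (\<lambda>j. F ^\<^sub>m j *\<^sub>v v) $ i"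
        using shifted i by simp
    qed (use F v in simp)
    then show ?thesis by blast
  qed
qed

lemma krylov_powers_in_span:
  assumes F: "F \<in> carrier_mat m m" and v: "v \<in> carrier_vec m"
    and dep: "F ^\<^sub>m r *\<^sub>v v = vec_lincomb m r \<beta> (\<lambda>j. F ^\<^sub>m j *\<^sub>v v)"
  shows "\<exists>a. F ^\<^sub>m k *\<^sub>v v = vec_lincomb m r a (\<lambda>j. F ^\<^sub>m j *\<^sub>v v)"
proof (induction k)
  case 0
  show ?case
  proof (cases r)
    case 0
    then show ?thesis using dep by auto
  next
    case (Suc r')
    have "F ^\<^sub>m 0 *\<^sub>v v = vec_lincomb m r (\<lambda>j. if j = 0 then 1 else 0) (\<lambda>j. F ^\<^sub>m j *\<^sub>v v)"
      using F v Suc by (intro eq_vecI) (auto simp: sum.lessThan_Suc_shift simp del: sum.lessThan_Suc)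
    then show ?thesis by blast
  qed
next
  case (Suc k)
  then show ?case using krylov_span_Suc[OF F v dep] by blast
qed

lemma pow_mult_vec_in_krylov_colspace:
  assumes F: "F \<in> carrier_mat m m" and v: "v \<in> carrier_vec m"
  shows "F ^\<^sub>m k *\<^sub>v v \<in> colspace (krylov_mat F v m)"
proof -
  obtain r \<beta> where r: "r \<le> m" "F ^\<^sub>m r *\<^sub>v v = vec_lincomb m r \<beta> (\<lambda>j. F ^\<^sub>m j *\<^sub>v v)"
    using krylov_dependence[OF F v] by blast
  obtain a where a: "F ^\<^sub>m k *\<^sub>v v = vec_lincomb m r a (\<lambda>j. F ^\<^sub>m j *\<^sub>v v)"
    using krylov_powers_in_span[OF F v r(2)] by blast
  define g where "g = vec m (\<lambda>j. if j < r then a j else 0)"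
  have "krylov_mat F v m *\<^sub>v g = vec_lincomb m m (\<lambda>j. g $ j) (\<lambda>j. F ^\<^sub>m j *\<^sub>v v)"
    by (rule krylov_mat_mult_vec[OF F v]) (simp add: g_def)
  also have "\<dots> = vec_lincomb m m (\<lambda>j. if j < r then a j else 0) (\<lambda>j. F ^\<^sub>m j *\<^sub>v v)"
    by (intro vec_lincomb_cong) (simp_all add: g_def)
  also have "\<dots> = F ^\<^sub>m k *\<^sub>v v" using vec_lincomb_pad[OF r(1)] a by simp
  finally have "krylov_mat F v m *\<^sub>v g = F ^\<^sub>m k *\<^sub>v v" .
  moreover have "krylov_mat F v m *\<^sub>v g \<in> colspace (krylov_mat F v m)"
    by (rule mult_mat_vec_in_colspace[OF krylov_mat_carrier[OF v]]) (simp add: g_def)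
  ultimately show ?thesis by simp
qed

section \<open>Stacked vectors and block-Hankel matrices\<close>

lemma sum_blocks:
  fixes f :: "nat \<Rightarrow> 'a :: comm_monoid_add"
  shows "(\<Sum>q<s * p. f q) = (\<Sum>k<s. \<Sum>t<p. f (k * p + t))"
proof (induction s)
  case (Suc s)
  have "(\<Sum>q<Suc s * p. f q) = (\<Sum>q<s * p. f q) + (\<Sum>q\<in>{s * p..<s * p + p}. f q)"
    by (simp add: lessThan_atLeast0 sum.atLeastLessThan_concat add.commute)
  also have "(\<Sum>q\<in>{s * p..<s * p + p}. f q) = (\<Sum>t<p. f (s * p + t))"
    using sum.shift_bounds_nat_ivl[of f 0 "s * p" p] by (simp add: lessThan_atLeast0 add.commute)
  finally show ?case using Suc by simp
qed simp

lemma sum_lessThan_if_less: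
  fixes f :: "nat \<Rightarrow> 'a :: comm_monoid_add"
  assumes "i \<le> n"
  shows "(\<Sum>m<n. if m < i then f m else 0) = (\<Sum>m<i. f m)"
proof -
  have "{m \<in> {..<n}. m < i} = {..<i}" using assms by auto
  then show ?thesis using sum.inter_filter[of "{..<n}" f "\<lambda>m. m < i"] by simp
qed

lemma sum_lessThan_if_window:
  fixes f :: "nat \<Rightarrow> 'a :: comm_monoid_add"
  assumes "i + L \<le> n"
  shows "(\<Sum>m<n. if i \<le> m \<and> m - i < L then f (m - i) else 0) = (\<Sum>j<L. f j)"
proof -
  have "{m \<in> {..<n}. i \<le> m \<and> m - i < L} = {i..<i + L}" using assms by auto
  then have "(\<Sum>m<n. if i \<le> m \<and> m - i < L then f (m - i) else 0) = (\<Sum>m\<in>{i..<i + L}. f (m - i))"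
    using sum.inter_filter[of "{..<n}" "\<lambda>m. f (m - i)" "\<lambda>m. i \<le> m \<and> m - i < L"] by simp
  also have "\<dots> = (\<Sum>j<L. f j)"
    using sum.shift_bounds_nat_ivl[of "\<lambda>m. f (m - i)" 0 i L] by (simp add: add.commute lessThan_atLeast0)
  finally show ?thesis .
qed

lemma stack_carrier[simp]: "stack p i s w \<in> carrier_vec (s * p)"
  and dim_stack[simp]: "dim_vec (stack p i s w) = s * p"
  unfolding stack_def by auto

lemma block_index_less: "k < s \<Longrightarrow> t < p \<Longrightarrow> k * p + t < s * (p :: nat)"
proof -
  assume "k < s" "t < p"
  then have "k * p + t < Suc k * p" by simp
  also have "\<dots> \<le> s * p" using \<open>k < s\<close> by (intro mult_le_mono1) simp
  finally show ?thesis .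
qed

lemma index_stack: "k < s \<Longrightarrow> t < p \<Longrightarrow> stack p i s w $ (k * p + t) = w (i + k) $ t"
  using block_index_less[of k s t p] by (simp add: stack_def)

lemma stack_cong:
  "(\<And>k. k < s \<Longrightarrow> w (i + k) = w' (i + k)) \<Longrightarrow> stack p i s w = stack p i s w'"
  unfolding stack_def by (intro eq_vecI) (auto simp: less_mult_imp_div_less)

lemma stack_one: "w i \<in> carrier_vec p \<Longrightarrow> stack p i 1 w = w i"
  unfolding stack_def by (intro eq_vecI) auto

lemma stack_zero: "stack p i s (\<lambda>_. 0\<^sub>v p) = 0\<^sub>v (s * p)"
proof (rule eq_vecI)
  fix r assume "r < dim_vec (0\<^sub>v (s * p) :: real vec)"
  then have r: "r < s * p" by simp
  then have "r mod p < p" by (cases p) auto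
  then show "stack p i s (\<lambda>_. 0\<^sub>v p) $ r = 0\<^sub>v (s * p) $ r" using r by (simp add: stack_def)
qed simp

lemma stack_of_blocks:
  assumes "v \<in> carrier_vec (s * p)"
  shows "stack p 0 s (\<lambda>k. vec p (\<lambda>t. v $ (k * p + t))) = v"
proof (rule eq_vecI)
  fix q assume "q < dim_vec v"
  then have q: "q < s * p" using assms by simp
  then have "0 < p" by (cases p) auto
  moreover have "q div p * p + q mod p = q" by simp
  ultimately show "stack p 0 s (\<lambda>k. vec p (\<lambda>t. v $ (k * p + t))) $ q = v $ q"
    using q by (simp add: stack_def)
qed (use assms in simp)

lemma stack_eq_imp_eq:
  assumes eq: "stack p i s w = stack p i s w'" and k: "k < s"
    and "w (i + k) \<in> carrier_vec p" "w' (i + k) \<in> carrier_vec p"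
  shows "w (i + k) = w' (i + k)"
proof (rule eq_vecI)
  fix t assume "t < dim_vec (w' (i + k))"
  then have "t < p" using assms by simp
  then show "w (i + k) $ t = w' (i + k) $ t"
    using arg_cong[OF eq, of "\<lambda>v. v $ (k * p + t)"] index_stack[OF k] by simp
qed (use assms in simp)

lemma scalar_prod_stack:
  assumes v: "\<And>k. k < s \<Longrightarrow> v k \<in> carrier_vec p" and w: "\<And>k. k < s \<Longrightarrow> w (i + k) \<in> carrier_vec p"
  shows "stack p 0 s v \<bullet> stack p i s w = (\<Sum>k<s. v k \<bullet> w (i + k))"
proof -
  have "stack p 0 s v \<bullet> stack p i s w = (\<Sum>q<s * p. stack p 0 s v $ q * stack p i s w $ q)"
    by (simp add: scalar_prod_def lessThan_atLeast0)
  also have "\<dots> = (\<Sum>k<s. \<Sum>t<p. v k $ t * w (i + k) $ t)"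
    by (subst sum_blocks) (simp add: index_stack)
  also have "\<dots> = (\<Sum>k<s. v k \<bullet> w (i + k))"
  proof (rule sum.cong[OF refl])
    fix k assume "k \<in> {..<s}"
    then show "(\<Sum>t<p. v k $ t * w (i + k) $ t) = v k \<bullet> w (i + k)"
      using w[of k] by (simp add: scalar_prod_def lessThan_atLeast0)
  qed
  finally show ?thesis .
qed

lemma block_hankel_carrier[simp]: "block_hankel p i s N w \<in> carrier_mat (s * p) N"
  and dim_row_block_hankel[simp]: "dim_row (block_hankel p i s N w) = s * p"
  and dim_col_block_hankel[simp]: "dim_col (block_hankel p i s N w) = N"
  unfolding block_hankel_def by simp_all

lemma col_block_hankel: "c < N \<Longrightarrow> col (block_hankel p i s N w) c = stack p (i + c) s w"
  unfolding block_hankel_def stack_def by (intro eq_vecI) (auto simp: algebra_simps)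

lemma col_block_hankel_one:
  "c < N \<Longrightarrow> w (i + c) \<in> carrier_vec p \<Longrightarrow> col (block_hankel p i 1 N w) c = w (i + c)"
  using col_block_hankel[of c N p i 1 w] stack_one[of w "i + c" p] by simp

lemma block_hankel_mult_vec_stack:
  assumes "g \<in> carrier_vec N"
  shows "block_hankel p i s N w *\<^sub>v g = stack p 0 s (\<lambda>k. block_hankel p (i + k) 1 N w *\<^sub>v g)"
proof (rule eq_vecI)
  fix r assume "r < dim_vec (stack p 0 s (\<lambda>k. block_hankel p (i + k) 1 N w *\<^sub>v g))"
  then have r: "r < s * p" by simp
  then have "r mod p < p" by (cases p) auto
  then show "(block_hankel p i s N w *\<^sub>v g) $ r
      = stack p 0 s (\<lambda>k. block_hankel p (i + k) 1 N w *\<^sub>v g) $ r"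
    using r assms by (simp add: block_hankel_def stack_def scalar_prod_def algebra_simps)
qed (simp add: block_hankel_def)

lemma block_hankel_one_mult_vec:
  assumes "g \<in> carrier_vec N"
  shows "block_hankel p i 1 N w *\<^sub>v g = vec_lincomb p N (\<lambda>c. g $ c) (\<lambda>c. w (i + c))"
  using assms unfolding block_hankel_def
  by (intro eq_vecI) (auto simp: scalar_prod_def lessThan_atLeast0 mult.commute intro!: sum.cong)

lemma block_hankel_one_linear_update:
  assumes M: "M \<in> carrier_mat q p" and M': "M' \<in> carrier_mat q p'"
    and w: "\<And>c. c < N \<Longrightarrow> w (i + c) \<in> carrier_vec p"
    and v: "\<And>c. c < N \<Longrightarrow> v (i + c) \<in> carrier_vec p'"
    and z: "\<And>c. c < N \<Longrightarrow> z (j + c) = M *\<^sub>v w (i + c) + M' *\<^sub>v v (i + c)"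
    and g: "g \<in> carrier_vec N"
  shows "block_hankel q j 1 N z *\<^sub>v g
    = M *\<^sub>v (block_hankel p i 1 N w *\<^sub>v g) + M' *\<^sub>v (block_hankel p' i 1 N v *\<^sub>v g)"
proof -
  have "block_hankel q j 1 N z *\<^sub>v g = (M * block_hankel p i 1 N w + M' * block_hankel p' i 1 N v) *\<^sub>v g"
  proof (rule arg_cong[where f = "\<lambda>X. X *\<^sub>v g"], rule eq_matI)
    fix r c assume "r < dim_row (M * block_hankel p i 1 N w + M' * block_hankel p' i 1 N v)"
      "c < dim_col (M * block_hankel p i 1 N w + M' * block_hankel p' i 1 N v)"
    then have r: "r < q" and c: "c < N" using M' by auto
    have "(M * block_hankel p i 1 N w) $$ (r, c) = (M *\<^sub>v w (i + c)) $ r"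
      using M r c col_block_hankel_one[of c N w i p, OF c w[OF c]] by simp
    moreover have "(M' * block_hankel p' i 1 N v) $$ (r, c) = (M' *\<^sub>v v (i + c)) $ r"
      using M' r c col_block_hankel_one[of c N v i p', OF c v[OF c]] by simp
    ultimately show "block_hankel q j 1 N z $$ (r, c)
        = (M * block_hankel p i 1 N w + M' * block_hankel p' i 1 N v) $$ (r, c)"
      using z[OF c] r c M M' by (simp add: block_hankel_def)
  qed (use M M' in auto)
  also have "(M * block_hankel p i 1 N w + M' * block_hankel p' i 1 N v) *\<^sub>v g
      = (M * block_hankel p i 1 N w) *\<^sub>v g + (M' * block_hankel p' i 1 N v) *\<^sub>v g"
    by (rule add_mult_distrib_mat_vec) (use M M' g in auto)
  also have "(M * block_hankel p i 1 N w) *\<^sub>v g = M *\<^sub>v (block_hankel p i 1 N w *\<^sub>v g)"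
    by (rule assoc_mult_mat_vec) (use M g in auto)
  also have "(M' * block_hankel p' i 1 N v) *\<^sub>v g = M' *\<^sub>v (block_hankel p' i 1 N v *\<^sub>v g)"
    by (rule assoc_mult_mat_vec) (use M' g in auto)
  finally show ?thesis .
qed

lemma pers_exc_no_annihilating_window:
  assumes PE: "pers_exc p i s N w"
    and w: "\<And>c m. c < N \<Longrightarrow> m < s \<Longrightarrow> w (i + c + m) \<in> carrier_vec p"
    and \<gamma>: "\<And>m. m < s \<Longrightarrow> \<gamma> m \<in> carrier_vec p"
    and orth: "\<And>c. c < N \<Longrightarrow> (\<Sum>m<s. \<gamma> m \<bullet> w (i + c + m)) = 0"
    and m: "m < s"
  shows "\<gamma> m = 0\<^sub>v p"
proof -
  let ?H = "block_hankel p i s N w"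
  have rank: "vec_space.rank (s * p) ?H = s * p"
    using PE unfolding pers_exc_def mrank_def by simp
  have "stack p 0 s \<gamma> \<bullet> col ?H c = 0" if "c < N" for c
    using orth[OF that] scalar_prod_stack[OF \<gamma>, where i = "i + c" and w = w] w[OF that]
    by (simp add: col_block_hankel[OF that] add.assoc)
  then have "stack p 0 s \<gamma> = 0\<^sub>v (s * p)"
    using eq_0_if_orthogonal_cols_full_rank[OF block_hankel_carrier rank stack_carrier] by blast
  also have "\<dots> = stack p 0 s (\<lambda>_. 0\<^sub>v p)" by (rule stack_zero[symmetric])
  finally show ?thesis using stack_eq_imp_eq[of p 0 s \<gamma> "\<lambda>_. 0\<^sub>v p" m] m \<gamma>[OF m] by simp
qed

section \<open>Triangular structure\<close>

lemma transpose_pow_mult_vec_scalar_prod: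
  fixes F :: "real mat"
  assumes F: "F \<in> carrier_mat m m" and \<xi>: "\<xi> \<in> carrier_vec m" and z: "z \<in> carrier_vec m"
  shows "(transpose_mat F ^\<^sub>m k *\<^sub>v \<xi>) \<bullet> z = \<xi> \<bullet> (F ^\<^sub>m k *\<^sub>v z)"
  using z
proof (induction k arbitrary: z)
  case 0
  then show ?case using \<xi> F by simp
next
  case (Suc k)
  have FT: "transpose_mat F \<in> carrier_mat m m" using F by simp
  have "(transpose_mat F ^\<^sub>m Suc k *\<^sub>v \<xi>) \<bullet> z
      = (transpose_mat F *\<^sub>v (transpose_mat F ^\<^sub>m k *\<^sub>v \<xi>)) \<bullet> z"
    using pow_mat_Suc_mult_vec[OF FT \<xi>] by simp
  also have "\<dots> = (transpose_mat F ^\<^sub>m k *\<^sub>v \<xi>) \<bullet> (F *\<^sub>v z)"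
    using transpose_vec_mult_scalar[OF F Suc.prems mult_mat_vec_carrier[OF pow_carrier_mat[OF FT] \<xi>]]
    by simp
  also have "\<dots> = \<xi> \<bullet> (F ^\<^sub>m k *\<^sub>v (F *\<^sub>v z))" using Suc F by simp
  also have "F ^\<^sub>m k *\<^sub>v (F *\<^sub>v z) = F ^\<^sub>m Suc k *\<^sub>v z"
    using F Suc.prems by (simp add: assoc_mult_mat_vec[of _ m m _ m])
  finally show ?case .
qed

lemma upper_block_triangular_pow_mult_vec:
  fixes A Bd Ad :: "real mat"
  assumes A: "A \<in> carrier_mat n1 n1" and Bd: "Bd \<in> carrier_mat n1 n2"
    and Ad: "Ad \<in> carrier_mat n2 n2" and y: "y \<in> carrier_vec n1"
  shows "four_block_mat A Bd (0\<^sub>m n2 n1) Ad ^\<^sub>m k *\<^sub>v (y @\<^sub>v 0\<^sub>v n2) = (A ^\<^sub>m k *\<^sub>v y) @\<^sub>v 0\<^sub>v n2"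
  using y
proof (induction k arbitrary: y)
  case 0
  then show ?case using A Ad by simp
next
  case (Suc k)
  let ?M = "four_block_mat A Bd (0\<^sub>m n2 n1) Ad"
  have M: "?M \<in> carrier_mat (n1 + n2) (n1 + n2)" using A Ad by simp
  have step: "?M *\<^sub>v (y @\<^sub>v 0\<^sub>v n2) = (A *\<^sub>v y) @\<^sub>v 0\<^sub>v n2"
    using four_block_mat_mult_vec[OF A Bd _ Ad Suc.prems, of "0\<^sub>m n2 n1" "0\<^sub>v n2"] A Bd Ad Suc.prems
    by simp
  have "?M ^\<^sub>m Suc k *\<^sub>v (y @\<^sub>v 0\<^sub>v n2) = ?M ^\<^sub>m k *\<^sub>v (?M *\<^sub>v (y @\<^sub>v 0\<^sub>v n2))"
    using M Suc.prems by (simp add: assoc_mult_mat_vec[of _ "n1 + n2" "n1 + n2" _ "n1 + n2"])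
  also have "\<dots> = (A ^\<^sub>m k *\<^sub>v (A *\<^sub>v y)) @\<^sub>v 0\<^sub>v n2"
    using step Suc.IH[of "A *\<^sub>v y"] A Suc.prems by simp
  also have "A ^\<^sub>m k *\<^sub>v (A *\<^sub>v y) = A ^\<^sub>m Suc k *\<^sub>v y"
    using A Suc.prems by (simp add: assoc_mult_mat_vec[of _ n1 n1 _ n1])
  finally show ?case .
qed

lemma vec_last_upper_block_triangular_step:
  fixes A Bd Ad B :: "real mat"
  assumes A: "A \<in> carrier_mat n1 n1" and Bd: "Bd \<in> carrier_mat n1 n2"
    and Ad: "Ad \<in> carrier_mat n2 n2" and B: "B \<in> carrier_mat n1 q"
    and z: "z \<in> carrier_vec (n1 + n2)" and u: "u \<in> carrier_vec q"
  shows "vec_last (four_block_mat A Bd (0\<^sub>m n2 n1) Ad *\<^sub>v z + (B @\<^sub>r 0\<^sub>m n2 q) *\<^sub>v u) n2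
    = Ad *\<^sub>v vec_last z n2"
proof -
  let ?x = "vec_first z n1" and ?d = "vec_last z n2"
  have "four_block_mat A Bd (0\<^sub>m n2 n1) Ad *\<^sub>v z = (A *\<^sub>v ?x + Bd *\<^sub>v ?d) @\<^sub>v (Ad *\<^sub>v ?d)"
    using four_block_mat_mult_vec[OF A Bd _ Ad, of "0\<^sub>m n2 n1" ?x ?d] z Ad by simp
  moreover have "(B @\<^sub>r 0\<^sub>m n2 q) *\<^sub>v u = (B *\<^sub>v u) @\<^sub>v 0\<^sub>v n2"
    using mat_mult_append[OF B zero_carrier_mat u] u by simp
  ultimately have "four_block_mat A Bd (0\<^sub>m n2 n1) Ad *\<^sub>v z + (B @\<^sub>r 0\<^sub>m n2 q) *\<^sub>v u
      = ((A *\<^sub>v ?x + Bd *\<^sub>v ?d) @\<^sub>v (Ad *\<^sub>v ?d)) + ((B *\<^sub>v u) @\<^sub>v 0\<^sub>v n2)"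
    by simp
  also have "\<dots> = (A *\<^sub>v ?x + Bd *\<^sub>v ?d + B *\<^sub>v u) @\<^sub>v (Ad *\<^sub>v ?d + 0\<^sub>v n2)"
    by (rule append_vec_add[of _ n1 _ _ n2]) (use A Bd Ad B u in auto)
  finally show ?thesis using vec_last_append[of "Ad *\<^sub>v ?d" n2] Ad by simp
qed

lemma col_ctrb_mat:
  assumes A: "A \<in> carrier_mat m m" and B: "B \<in> carrier_mat m p" and q: "q < m * p"
  shows "col (ctrb_mat A B) q = A ^\<^sub>m (q div p) *\<^sub>v col B (q mod p)"
proof -
  have "0 < p" using q by (cases p) auto
  then show ?thesis unfolding ctrb_mat_def using A B q by (intro eq_vecI) (auto simp: scalar_prod_def)
qed

text \<open>Back substitution in a banded triangular system: equation \<open>j + r\<close> isolates \<open>\<eta> j\<close>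
  (the later \<open>\<eta>\<close>'s being already zero), after which equation \<open>r - 1 - k\<close> isolates \<open>e k\<close>.\<close>
lemma banded_triangular_system_zero:
  fixes \<alpha> e \<eta> :: "nat \<Rightarrow> real"
  assumes top: "\<alpha> r = 1"
    and eqs: "\<And>m. m < L + r \<Longrightarrow>
      (\<Sum>i<Suc r. \<alpha> i * ((if m < i then e (i - 1 - m) else 0)
                         + (if i \<le> m \<and> m - i < L then \<eta> (m - i) else 0))) = 0"
  shows "\<forall>j<L. \<eta> j = 0" and "\<forall>k<r. e k = 0"
proof -
  let ?G = "\<lambda>i m. (if m < i then e (i - 1 - m) else 0) + (if i \<le> m \<and> m - i < L then \<eta> (m - i) else 0)"
  show \<eta>0: "\<forall>j<L. \<eta> j = 0"
  proof (intro allI impI)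
    fix j assume "j < L"
    then show "\<eta> j = 0"
    proof (induction "L - j" arbitrary: j rule: less_induct)
      case less
      have "(\<Sum>i<r. \<alpha> i * ?G i (j + r)) = 0"
      proof (intro sum.neutral ballI)
        fix i assume "i \<in> {..<r}"
        then have "j + r - i > j" by auto
        then show "\<alpha> i * ?G i (j + r) = 0"
          using less.hyps[of "j + r - i"] \<open>i \<in> {..<r}\<close> by auto
      qed
      then show "\<eta> j = 0" using eqs[of "j + r"] less.prems top by simp
    qed
  qed
  show "\<forall>k<r. e k = 0"
  proof (intro allI impI)
    fix k assume "k < r"
    then show "e k = 0"
    proof (induction k rule: less_induct)
      case (less k)
      define m where "m = r - 1 - k"
      have G: "?G i m = (if m < i then e (i - 1 - m) else 0)" for i using \<eta>0 by auto
      have "(\<Sum>i<r. \<alpha> i * ?G i m) = 0"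
      proof (intro sum.neutral ballI)
        fix i assume "i \<in> {..<r}"
        then have "m < i \<Longrightarrow> i - 1 - m < k" using less.prems unfolding m_def by auto
        then show "\<alpha> i * ?G i m = 0" using less.IH \<open>i \<in> {..<r}\<close> less.prems G by auto
      qed
      moreover have "?G r m = e k" using G less.prems unfolding m_def by auto
      moreover have "m < L + r" using less.prems unfolding m_def by auto
      ultimately show "e k = 0" using eqs[of m] top by simp
    qed
  qed
qed

section \<open>The left kernel of the data matrix\<close>

locale lti_experiment =
  fixes nx nd nu N L :: nat
    and A Bd Ad B :: "real mat"
    and um xbm :: "nat \<Rightarrow> real vec"
  assumes A: "A \<in> carrier_mat nx nx" and Bd: "Bd \<in> carrier_mat nx nd"
    and Ad: "Ad \<in> carrier_mat nd nd" and B: "B \<in> carrier_mat nx nu"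
    and N: "1 \<le> N" and L: "1 \<le> L"
    and um_carrier: "\<And>k. k \<le> N + L + (nx + nd) - 2 \<Longrightarrow> um k \<in> carrier_vec nu"
    and xbm_0_carrier: "xbm 0 \<in> carrier_vec (nx + nd)"
    and xbm_Suc: "\<And>k. k < N + L + (nx + nd) - 2 \<Longrightarrow>
      xbm (Suc k) = four_block_mat A Bd (0\<^sub>m nd nx) Ad *\<^sub>v xbm k + (B @\<^sub>r 0\<^sub>m nd nu) *\<^sub>v um k"
begin

abbreviation "nbar \<equiv> nx + nd"
abbreviation "T \<equiv> N + L + nbar - 2"
abbreviation "AL \<equiv> four_block_mat A Bd (0\<^sub>m nd nx) Ad"
abbreviation "BL \<equiv> B @\<^sub>r 0\<^sub>m nd nu"
abbreviation "Kd \<equiv> krylov_mat Ad (vec_last (xbm 0) nd) nd"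

lemma AL_carrier: "AL \<in> carrier_mat nbar nbar"
  using A Bd Ad by simp

lemma BL_carrier: "BL \<in> carrier_mat nbar nu"
  using B by simp

lemma system_dims[simp]:
  "dim_row A = nx" "dim_col A = nx" "dim_row Bd = nx" "dim_col Bd = nd"
  "dim_row Ad = nd" "dim_col Ad = nd" "dim_row B = nx" "dim_col B = nu"
  using A Bd Ad B by auto

lemma BL_dims[simp]: "dim_row BL = nbar" "dim_col BL = nu"
  using BL_carrier by auto

lemma xbm_carrier: "k \<le> T \<Longrightarrow> xbm k \<in> carrier_vec nbar"
proof (induction k)
  case (Suc k)
  then show ?case using xbm_Suc[of k] AL_carrier BL_carrier um_carrier[of k] by simp
qed (rule xbm_0_carrier)

lemma Kd_carrier: "Kd \<in> carrier_mat nd nd"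
  by (rule krylov_mat_carrier) simp

lemma disturbance_trajectory: "k \<le> T \<Longrightarrow> vec_last (xbm k) nd = Ad ^\<^sub>m k *\<^sub>v vec_last (xbm 0) nd"
proof (induction k)
  case (Suc k)
  then have "vec_last (xbm (Suc k)) nd = Ad *\<^sub>v vec_last (xbm k) nd"
    using xbm_Suc[of k] vec_last_upper_block_triangular_step[OF A Bd Ad B] xbm_carrier[of k]
      um_carrier[of k] by simp
  then show ?case using Suc pow_mat_Suc_mult_vec[OF Ad vec_last_carrier] by simp
qed (use Ad in simp)

lemma disturbance_in_colspace_Kd:
  assumes "k \<le> T"
  shows "vec_last (xbm k) nd \<in> colspace Kd"
proof -
  have "Ad ^\<^sub>m k *\<^sub>v vec_last (xbm 0) nd \<in> colspace Kd"
    by (rule pow_mult_vec_in_krylov_colspace[OF Ad vec_last_carrier])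
  then show ?thesis by (subst disturbance_trajectory[OF assms])
qed

text \<open>For a row vector \<open>\<xi>\<^sup>T\<close>: \<open>adj_pow \<xi> k = (\<xi>\<^sup>T AL\<^sup>k)\<^sup>T\<close> and
  \<open>markov_param \<xi> k = (\<xi>\<^sup>T AL\<^sup>k BL)\<^sup>T\<close>.\<close>
definition adj_pow :: "real vec \<Rightarrow> nat \<Rightarrow> real vec" where
  "adj_pow \<xi> k = transpose_mat AL ^\<^sub>m k *\<^sub>v \<xi>"

definition markov_param :: "real vec \<Rightarrow> nat \<Rightarrow> real vec" where
  "markov_param \<xi> k = transpose_mat BL *\<^sub>v adj_pow \<xi> k"

lemma adj_pow_carrier: "adj_pow \<xi> k \<in> carrier_vec nbar"
  unfolding adj_pow_def by (rule carrier_vecI) simp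

lemma markov_param_carrier: "markov_param \<xi> k \<in> carrier_vec nu"
  unfolding markov_param_def by (rule carrier_vecI) simp

lemma adj_pow_step:
  assumes \<xi>: "\<xi> \<in> carrier_vec nbar" and z: "z \<in> carrier_vec nbar" and u: "u \<in> carrier_vec nu"
  shows "adj_pow \<xi> k \<bullet> (AL *\<^sub>v z + BL *\<^sub>v u) = adj_pow \<xi> (Suc k) \<bullet> z + markov_param \<xi> k \<bullet> u"
proof -
  have ALT: "transpose_mat AL \<in> carrier_mat nbar nbar" using AL_carrier by simp
  have "adj_pow \<xi> k \<bullet> (AL *\<^sub>v z) = adj_pow \<xi> (Suc k) \<bullet> z"
    using transpose_vec_mult_scalar[OF AL_carrier z adj_pow_carrier]
      pow_mat_Suc_mult_vec[OF ALT \<xi>] by (simp add: adj_pow_def)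
  moreover have "adj_pow \<xi> k \<bullet> (BL *\<^sub>v u) = markov_param \<xi> k \<bullet> u"
    using transpose_vec_mult_scalar[OF BL_carrier u adj_pow_carrier]
    by (simp add: markov_param_def)
  ultimately show ?thesis
    using scalar_prod_add_distrib[OF adj_pow_carrier, of "AL *\<^sub>v z" "BL *\<^sub>v u"]
      AL_carrier BL_carrier z u by simp
qed

lemma adj_pow_trajectory:
  assumes \<xi>: "\<xi> \<in> carrier_vec nbar" and ci: "c + i \<le> T"
  shows "adj_pow \<xi> k \<bullet> xbm (c + i)
    = adj_pow \<xi> (k + i) \<bullet> xbm c + (\<Sum>l<i. markov_param \<xi> (k + i - 1 - l) \<bullet> um (c + l))"
  using ci
proof (induction i arbitrary: k)
  case (Suc i)
  have "adj_pow \<xi> k \<bullet> xbm (c + Suc i) = adj_pow \<xi> (Suc k) \<bullet> xbm (c + i) + markov_param \<xi> k \<bullet> um (c + i)"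
    using xbm_Suc[of "c + i"] adj_pow_step[OF \<xi> xbm_carrier um_carrier] Suc.prems by simp
  then show ?case using Suc by (simp add: add.commute)
qed simp

lemma markov_param_index:
  assumes \<xi>: "\<xi> \<in> carrier_vec nbar" and t: "t < nu"
  shows "markov_param \<xi> k $ t = vec_first \<xi> nx \<bullet> (A ^\<^sub>m k *\<^sub>v col B t)"
proof -
  have colB: "col B t \<in> carrier_vec nx" using B col_dim[of B t] by simp
  have col_BL: "col BL t = col B t @\<^sub>v 0\<^sub>v nd"
    using B t by (intro eq_vecI) (auto simp: append_rows_def)
  have "markov_param \<xi> k $ t = col BL t \<bullet> adj_pow \<xi> k"
    using BL_carrier t by (simp add: markov_param_def)
  also have "\<dots> = adj_pow \<xi> k \<bullet> col BL t"
    using col_dim[of BL t] adj_pow_carrier by (intro comm_scalar_prod[of _ nbar]) auto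
  also have "\<dots> = \<xi> \<bullet> ((A ^\<^sub>m k *\<^sub>v col B t) @\<^sub>v 0\<^sub>v nd)"
    unfolding adj_pow_def col_BL
    using transpose_pow_mult_vec_scalar_prod[OF AL_carrier \<xi>] upper_block_triangular_pow_mult_vec[OF A Bd Ad colB]
      colB by simp
  also have "\<dots> = vec_first \<xi> nx \<bullet> (A ^\<^sub>m k *\<^sub>v col B t) + vec_last \<xi> nd \<bullet> 0\<^sub>v nd"
    by (subst vec_first_last_append[OF \<xi>, symmetric], rule scalar_prod_append[of _ nx _ nd])
      (use mult_mat_vec_carrier[OF pow_carrier_mat[OF A] colB] in auto)
  finally show ?thesis by simp
qed

text \<open>The weight of \<open>u (c + m)\<close> in \<open>\<xi> \<bullet> x (c + i) + (\<Sum>j<L. \<eta> j \<bullet> u (c + i + j))\<close> once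
  \<open>x (c + i)\<close> is expanded from \<open>x c\<close>.\<close>
definition window_weight :: "real vec \<Rightarrow> (nat \<Rightarrow> real vec) \<Rightarrow> nat \<Rightarrow> nat \<Rightarrow> real vec" where
  "window_weight \<xi> \<eta> i m =
     (if m < i then markov_param \<xi> (i - 1 - m) else 0\<^sub>v nu) + (if i \<le> m \<and> m - i < L then \<eta> (m - i) else 0\<^sub>v nu)"

lemma annihilator_shift:
  assumes \<xi>: "\<xi> \<in> carrier_vec nbar" and \<eta>: "\<And>j. j < L \<Longrightarrow> \<eta> j \<in> carrier_vec nu"
    and c: "c < N" and i: "i \<le> nbar"
  shows "\<xi> \<bullet> xbm (c + i) + (\<Sum>j<L. \<eta> j \<bullet> um (c + i + j))
    = adj_pow \<xi> i \<bullet> xbm c + (\<Sum>m<L + nbar. window_weight \<xi> \<eta> i m \<bullet> um (c + m))"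
proof -
  have u: "um (c + m) \<in> carrier_vec nu" if "m < L + nbar" for m
    using that c by (intro um_carrier) linarith
  have "(\<Sum>m<L + nbar. window_weight \<xi> \<eta> i m \<bullet> um (c + m))
      = (\<Sum>m<L + nbar. if m < i then markov_param \<xi> (i - 1 - m) \<bullet> um (c + m) else 0)
        + (\<Sum>m<L + nbar. if i \<le> m \<and> m - i < L then \<eta> (m - i) \<bullet> um (c + i + (m - i)) else 0)"
    unfolding sum.distrib[symmetric]
    by (intro sum.cong refl)
      (use u \<eta> markov_param_carrier in \<open>auto simp: window_weight_def scalar_prod_add_distrib\<close>)
  also have "\<dots> = (\<Sum>l<i. markov_param \<xi> (i - 1 - l) \<bullet> um (c + l)) + (\<Sum>j<L. \<eta> j \<bullet> um (c + i + j))"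
    using i sum_lessThan_if_window[where f = "\<lambda>j. \<eta> j \<bullet> um (c + i + j)" and n = "L + nbar"]
    by (simp add: sum_lessThan_if_less)
  moreover have "c + i \<le> T" using c i L by linarith
  ultimately show ?thesis
    using adj_pow_trajectory[OF \<xi>, of c i 0] \<xi> by (simp add: adj_pow_def)
qed


lemma window_weight_index:
  assumes \<eta>: "\<And>j. j < L \<Longrightarrow> \<eta> j \<in> carrier_vec nu" and t: "t < nu"
  shows "window_weight \<xi> \<eta> i m $ t = (if m < i then markov_param \<xi> (i - 1 - m) $ t else 0)
    + (if i \<le> m \<and> m - i < L then \<eta> (m - i) $ t else 0)"
  unfolding window_weight_def using \<eta> markov_param_carrier[of \<xi>] t by auto

text \<open>Combining the shifted annihilation identities for \<open>i \<le> r\<close> with the coefficients \<open>\<alpha>\<close> of a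
  relation \<open>\<Sum>i\<le>r. \<alpha> i \<cdot> adj_pow \<xi> i = 0\<close> eliminates the state, leaving an input window
  annihilated on all of the data, hence zero by persistency of excitation.\<close>
lemma combined_window_weight_zero:
  assumes PE: "pers_exc nu 0 (L + nbar) N um"
    and \<xi>: "\<xi> \<in> carrier_vec nbar" and \<eta>: "\<And>j. j < L \<Longrightarrow> \<eta> j \<in> carrier_vec nu"
    and R: "\<And>c. c < N + nbar \<Longrightarrow> \<xi> \<bullet> xbm c + (\<Sum>j<L. \<eta> j \<bullet> um (c + j)) = 0"
    and r: "r \<le> nbar"
    and rel: "\<And>z. z \<in> carrier_vec nbar \<Longrightarrow> (\<Sum>i<Suc r. \<alpha> i * (adj_pow \<xi> i \<bullet> z)) = 0"
    and m: "m < L + nbar"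
  shows "vec_lincomb nu (Suc r) \<alpha> (\<lambda>i. window_weight \<xi> \<eta> i m) = 0\<^sub>v nu"
proof (rule pers_exc_no_annihilating_window[OF PE _ _ _ m])
  let ?\<gamma> = "\<lambda>m. vec_lincomb nu (Suc r) \<alpha> (\<lambda>i. window_weight \<xi> \<eta> i m)"
  show u: "um (0 + c + m) \<in> carrier_vec nu" if "c < N" "m < L + nbar" for c m
    using that by (intro um_carrier) linarith
  show "?\<gamma> m \<in> carrier_vec nu" for m by simp
  fix c assume c: "c < N"
  have "(\<Sum>m<L + nbar. ?\<gamma> m \<bullet> um (0 + c + m))
      = (\<Sum>m<L + nbar. \<Sum>i<Suc r. \<alpha> i * (window_weight \<xi> \<eta> i m \<bullet> um (c + m)))"
    using vec_lincomb_scalar_prod u[OF c] by simp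
  also have "\<dots> = (\<Sum>i<Suc r. \<alpha> i * (\<Sum>m<L + nbar. window_weight \<xi> \<eta> i m \<bullet> um (c + m)))"
    by (subst sum.swap) (simp add: sum_distrib_left)
  also have "\<dots> = (\<Sum>i<Suc r. \<alpha> i * - (adj_pow \<xi> i \<bullet> xbm c))"
  proof (intro sum.cong refl arg_cong[where f = "\<lambda>x. \<alpha> _ * x"])
    fix i assume "i \<in> {..<Suc r}"
    then have i: "i \<le> nbar" and "c + i < N + nbar" using r c by auto
    then show "(\<Sum>m<L + nbar. window_weight \<xi> \<eta> i m \<bullet> um (c + m)) = - (adj_pow \<xi> i \<bullet> xbm c)"
      using R[of "c + i"] annihilator_shift[where \<eta> = \<eta>, OF \<xi> \<eta> c i] by (simp add: add.assoc)
  qed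
  also have "\<dots> = 0"
    using rel[OF xbm_carrier, of c] c L by (simp add: sum_negf)
  finally show "(\<Sum>m<L + nbar. ?\<gamma> m \<bullet> um (0 + c + m)) = 0" .
qed

text \<open>Hypothesis \<open>R\<close> says that \<open>(\<xi>, \<eta>)\<close> annihilates every column \<open>(x c, u c, \<dots>, u (c + L - 1))\<close>
  of the data matrix.\<close>
lemma annihilator_input_part_zero:
  assumes PE: "pers_exc nu 0 (L + nbar) N um"
    and \<xi>: "\<xi> \<in> carrier_vec nbar" and \<eta>: "\<And>j. j < L \<Longrightarrow> \<eta> j \<in> carrier_vec nu"
    and R: "\<And>c. c < N + nbar \<Longrightarrow> \<xi> \<bullet> xbm c + (\<Sum>j<L. \<eta> j \<bullet> um (c + j)) = 0"
  shows "\<forall>j<L. \<eta> j = 0\<^sub>v nu" and "\<forall>k. markov_param \<xi> k = 0\<^sub>v nu"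
proof -
  have ALT: "transpose_mat AL \<in> carrier_mat nbar nbar" using AL_carrier by simp
  obtain r \<beta> where r: "r \<le> nbar" and dep: "adj_pow \<xi> r = vec_lincomb nbar r \<beta> (adj_pow \<xi>)"
    using krylov_dependence[OF ALT \<xi>] unfolding adj_pow_def by blast
  define \<alpha> where "\<alpha> i = (if i = r then 1 else - \<beta> i)" for i
  have rel: "(\<Sum>i<Suc r. \<alpha> i * (adj_pow \<xi> i \<bullet> z)) = 0" if z: "z \<in> carrier_vec nbar" for z
  proof -
    have "(\<Sum>i<r. \<alpha> i * (adj_pow \<xi> i \<bullet> z)) = - (\<Sum>i<r. \<beta> i * (adj_pow \<xi> i \<bullet> z))"
      unfolding sum_negf[symmetric] by (intro sum.cong) (auto simp: \<alpha>_def)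
    then show ?thesis using dep vec_lincomb_scalar_prod[OF z] by (simp add: \<alpha>_def)
  qed
  have \<gamma>: "vec_lincomb nu (Suc r) \<alpha> (\<lambda>i. window_weight \<xi> \<eta> i m) = 0\<^sub>v nu" if "m < L + r" for m
    using combined_window_weight_zero[OF PE \<xi> \<eta> R r rel] that r by simp
  have zero_below_r: "(\<forall>j<L. \<eta> j $ t = 0) \<and> (\<forall>k<r. markov_param \<xi> k $ t = 0)" if t: "t < nu" for t
  proof -
    have "(\<Sum>i<Suc r. \<alpha> i * ((if m < i then markov_param \<xi> (i - 1 - m) $ t else 0)
        + (if i \<le> m \<and> m - i < L then \<eta> (m - i) $ t else 0))) = 0" if m: "m < L + r" for m
      using arg_cong[OF \<gamma>[OF m], of "\<lambda>v. v $ t"] t by (simp add: window_weight_index[OF \<eta> t])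
    moreover have "\<alpha> r = 1" by (simp add: \<alpha>_def)
    ultimately show ?thesis
      using banded_triangular_system_zero[where e = "\<lambda>k. markov_param \<xi> k $ t" and \<eta> = "\<lambda>j. \<eta> j $ t"]
      by blast
  qed
  show "\<forall>j<L. \<eta> j = 0\<^sub>v nu"
    using zero_below_r \<eta> by (auto intro!: eq_vecI)
  show "\<forall>k. markov_param \<xi> k = 0\<^sub>v nu"
  proof
    fix k
    obtain a where "adj_pow \<xi> k = vec_lincomb nbar r a (adj_pow \<xi>)"
      using krylov_powers_in_span[OF ALT \<xi> dep[unfolded adj_pow_def]] unfolding adj_pow_def by blast
    then have "markov_param \<xi> k = vec_lincomb nu r a (markov_param \<xi>)"
      unfolding markov_param_def using mult_mat_vec_lincomb[OF transpose_carrier_mat[THEN iffD2, OF BL_carrier]]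
        adj_pow_carrier by simp
    then show "markov_param \<xi> k = 0\<^sub>v nu"
      using zero_below_r by (intro eq_vecI) auto
  qed
qed

end

section \<open>Column space and rank of the data matrix\<close>

locale exciting_lti_experiment = lti_experiment +
  assumes controllable: "controllable A B"
    and persistently_exciting: "pers_exc nu 0 (L + (nx + nd)) N um"
begin

abbreviation "Hx \<equiv> block_hankel nbar 0 1 (N + nbar) xbm"
abbreviation "Hu \<equiv> block_hankel nu 0 L (N + nbar) um"

lemma data_mat_carrier: "Hx @\<^sub>r Hu \<in> carrier_mat (nbar + L * nu) (N + nbar)"
  using carrier_append_rows[OF block_hankel_carrier[of nbar 0 1 "N + nbar" xbm] block_hankel_carrier]
  by simp

lemma Hx_mult_vec_carrier: "g \<in> carrier_vec (N + nbar) \<Longrightarrow> Hx *\<^sub>v g \<in> carrier_vec nbar"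
  using mult_mat_vec_carrier[OF block_hankel_carrier[of nbar 0 1 "N + nbar" xbm]] by simp

lemma scalar_prod_col_data_mat:
  assumes \<xi>: "\<xi> \<in> carrier_vec nbar" and \<eta>: "\<And>j. j < L \<Longrightarrow> \<eta> j \<in> carrier_vec nu"
    and c: "c < N + nbar"
  shows "(\<xi> @\<^sub>v stack nu 0 L \<eta>) \<bullet> col (Hx @\<^sub>r Hu) c = \<xi> \<bullet> xbm c + (\<Sum>j<L. \<eta> j \<bullet> um (c + j))"
proof -
  have cT: "c + j \<le> T" if "j < L" for j using c that by linarith
  have xc: "xbm (0 + c) \<in> carrier_vec nbar" using c L by (intro xbm_carrier) linarith
  have "col (Hx @\<^sub>r Hu) c = col Hx c @\<^sub>v col Hu c"
    by (rule col_append_rows[OF block_hankel_carrier block_hankel_carrier c])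
  also have "col Hx c = xbm c" using col_block_hankel_one[of c "N + nbar" xbm 0 nbar, OF c xc] by simp
  also have "col Hu c = stack nu c L um" using col_block_hankel[OF c, of nu 0 L um] by simp
  finally have "(\<xi> @\<^sub>v stack nu 0 L \<eta>) \<bullet> col (Hx @\<^sub>r Hu) c
      = (\<xi> @\<^sub>v stack nu 0 L \<eta>) \<bullet> (xbm c @\<^sub>v stack nu c L um)" by simp
  also have "\<dots> = \<xi> \<bullet> xbm c + stack nu 0 L \<eta> \<bullet> stack nu c L um"
    by (rule scalar_prod_append[of _ nbar _ "L * nu"]) (use \<xi> xc in auto)
  also have "stack nu 0 L \<eta> \<bullet> stack nu c L um = (\<Sum>j<L. \<eta> j \<bullet> um (c + j))"
    using scalar_prod_stack[OF \<eta>] um_carrier cT by simp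
  finally show ?thesis .
qed

lemma annihilator_structure:
  assumes \<xi>: "\<xi> \<in> carrier_vec nbar" and \<eta>: "\<And>j. j < L \<Longrightarrow> \<eta> j \<in> carrier_vec nu"
    and R: "\<And>c. c < N + nbar \<Longrightarrow> \<xi> \<bullet> xbm c + (\<Sum>j<L. \<eta> j \<bullet> um (c + j)) = 0"
  shows "\<forall>j<L. \<eta> j = 0\<^sub>v nu" and "vec_first \<xi> nx = 0\<^sub>v nx"
    and "\<forall>d \<in> colspace Kd. vec_last \<xi> nd \<bullet> d = 0"
proof -
  note input = annihilator_input_part_zero[OF persistently_exciting \<xi> \<eta> R]
  show "\<forall>j<L. \<eta> j = 0\<^sub>v nu" by (rule input(1))
  have ctrb: "vec_space.rank nx (ctrb_mat A B) = nx"
    using controllable unfolding controllable_def mrank_def by (simp add: ctrb_mat_def)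
  have C: "ctrb_mat A B \<in> carrier_mat nx (nx * nu)" unfolding ctrb_mat_def by simp
  show x_part: "vec_first \<xi> nx = 0\<^sub>v nx"
  proof (rule eq_0_if_orthogonal_cols_full_rank[OF C ctrb vec_first_carrier])
    fix q assume q: "q < nx * nu"
    then have "q mod nu < nu" by (cases nu) auto
    then show "vec_first \<xi> nx \<bullet> col (ctrb_mat A B) q = 0"
      using col_ctrb_mat[OF A B q] markov_param_index[OF \<xi>, of "q mod nu" "q div nu"] input(2) by simp
  qed
  show "\<forall>d \<in> colspace Kd. vec_last \<xi> nd \<bullet> d = 0"
  proof
    fix d assume d: "d \<in> colspace Kd"
    show "vec_last \<xi> nd \<bullet> d = 0"
    proof (rule orthogonal_colspace[OF Kd_carrier vec_last_carrier _ d])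
      fix c assume c: "c < nd"
      then have cT: "c \<le> T" and cN: "c < N + nbar" using N L by linarith+
      have "\<eta> j \<bullet> um (c + j) = 0" if "j < L" for j
      proof -
        have "um (c + j) \<in> carrier_vec nu" using c that N by (intro um_carrier) linarith
        then show ?thesis using input(1) that by simp
      qed
      then have "(\<Sum>j<L. \<eta> j \<bullet> um (c + j)) = 0" by simp
      then have "\<xi> \<bullet> xbm c = 0" using R[OF cN] by simp
      then have "vec_last \<xi> nd \<bullet> vec_last (xbm c) nd = 0"
        using scalar_prod_split[OF \<xi> xbm_carrier[OF cT]] x_part by simp
      then show "vec_last \<xi> nd \<bullet> col Kd c = 0"
        using col_krylov_mat[OF c Ad vec_last_carrier] disturbance_trajectory[OF cT] by simp
    qed
  qed
qed

lemma data_colspace_contains: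
  assumes x0: "x0 \<in> carrier_vec nx" and d0: "d0 \<in> colspace Kd" and z: "z \<in> carrier_vec (L * nu)"
  shows "(x0 @\<^sub>v d0) @\<^sub>v z \<in> colspace (Hx @\<^sub>r Hu)"
proof (rule fredholm_alternative)
  show "Hx @\<^sub>r Hu \<in> carrier_mat (nbar + L * nu) (N + nbar)" by (rule data_mat_carrier)
  have d0C: "d0 \<in> carrier_vec nd" using d0 Kd_carrier by (auto simp: colspace_def)
  show "(x0 @\<^sub>v d0) @\<^sub>v z \<in> carrier_vec (nbar + L * nu)" using x0 d0C z by simp
  fix w assume w: "w \<in> carrier_vec (nbar + L * nu)"
    and orth: "\<forall>c < N + nbar. w \<bullet> col (Hx @\<^sub>r Hu) c = 0"
  define \<xi> where "\<xi> = vec_first w nbar"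
  define \<eta> where "\<eta> j = vec nu (\<lambda>t. vec_last w (L * nu) $ (j * nu + t))" for j
  have \<xi>: "\<xi> \<in> carrier_vec nbar" and \<eta>: "\<And>j. \<eta> j \<in> carrier_vec nu" unfolding \<xi>_def \<eta>_def by simp_all
  have w_split: "w = \<xi> @\<^sub>v stack nu 0 L \<eta>"
    using w stack_of_blocks[of "vec_last w (L * nu)" L nu] unfolding \<xi>_def \<eta>_def by simp
  have "\<xi> \<bullet> xbm c + (\<Sum>j<L. \<eta> j \<bullet> um (c + j)) = 0" if c: "c < N + nbar" for c
    using orth scalar_prod_col_data_mat[where \<eta> = \<eta>, OF \<xi> \<eta> c] w_split c by simp
  note ann = annihilator_structure[OF \<xi> \<eta> this]
  have "stack nu 0 L \<eta> = 0\<^sub>v (L * nu)"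
    using stack_cong[where i = 0 and w = \<eta> and w' = "\<lambda>_. 0\<^sub>v nu" and s = L and p = nu] ann(1) stack_zero
    by simp
  then have "w \<bullet> ((x0 @\<^sub>v d0) @\<^sub>v z) = \<xi> \<bullet> (x0 @\<^sub>v d0)"
    using w_split \<xi> x0 d0C z by (simp add: scalar_prod_append[of _ nbar _ "L * nu"])
  also have "\<dots> = vec_last \<xi> nd \<bullet> d0"
    using scalar_prod_split[OF \<xi>, of "x0 @\<^sub>v d0"] ann(2) x0 d0C vec_last_append[OF d0C] by simp
  also have "\<dots> = 0" using ann(3) d0 by blast
  finally show "w \<bullet> ((x0 @\<^sub>v d0) @\<^sub>v z) = 0" .
qed

lemma colspace_data_mat:
  "colspace (Hx @\<^sub>r Hu)
    = {(x @\<^sub>v d) @\<^sub>v z | x d z. x \<in> carrier_vec nx \<and> d \<in> colspace Kd \<and> z \<in> carrier_vec (L * nu)}"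
proof (intro equalityI subsetI)
  fix v assume "v \<in> colspace (Hx @\<^sub>r Hu)"
  then obtain g where g: "g \<in> carrier_vec (N + nbar)" "v = (Hx @\<^sub>r Hu) *\<^sub>v g"
    by (rule colspaceE[OF _ data_mat_carrier])
  have xbm: "\<And>c. c < N + nbar \<Longrightarrow> xbm (0 + c) \<in> carrier_vec (nx + nd)"
    using L by (intro xbm_carrier) linarith
  have "vec_last (Hx *\<^sub>v g) nd = vec_lincomb nd (N + nbar) (\<lambda>c. g $ c) (\<lambda>c. vec_last (xbm c) nd)"
    using block_hankel_one_mult_vec[OF g(1)] vec_last_vec_lincomb[of "N + nbar" "\<lambda>c. xbm (0 + c)"] xbm
    by simp
  also have "\<dots> \<in> colspace Kd"
    using L by (intro vec_lincomb_in_colspace[OF Kd_carrier] disturbance_in_colspace_Kd) linarith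
  finally have "vec_last (Hx *\<^sub>v g) nd \<in> colspace Kd" .
  moreover have "Hx *\<^sub>v g \<in> carrier_vec nbar" by (rule Hx_mult_vec_carrier[OF g(1)])
  then have "v = (vec_first (Hx *\<^sub>v g) nx @\<^sub>v vec_last (Hx *\<^sub>v g) nd) @\<^sub>v (Hu *\<^sub>v g)"
    using g mat_mult_append[OF block_hankel_carrier block_hankel_carrier g(1)] vec_first_last_append
    by simp
  moreover have "Hu *\<^sub>v g \<in> carrier_vec (L * nu)"
    using mult_mat_vec_carrier[OF block_hankel_carrier g(1)] .
  ultimately show "v \<in> {(x @\<^sub>v d) @\<^sub>v z | x d z. x \<in> carrier_vec nx \<and> d \<in> colspace Kd \<and> z \<in> carrier_vec (L * nu)}"
    using vec_first_carrier by blast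
qed (blast intro: data_colspace_contains)

lemma rank_data_mat:
  "vec_space.rank (nbar + L * nu) (Hx @\<^sub>r Hu) = L * nu + nx + vec_space.rank nd Kd"
proof -
  let ?\<nu> = "vec_space.rank nd Kd"
  obtain Kb where Kb: "Kb \<in> carrier_mat nd ?\<nu>" "colspace Kb = colspace Kd"
    and Kb_ker: "\<And>v. v \<in> carrier_vec ?\<nu> \<Longrightarrow> Kb *\<^sub>v v = 0\<^sub>v nd \<Longrightarrow> v = 0\<^sub>v ?\<nu>"
    by (rule exists_injective_basis_mat[OF Kd_carrier]) blast
  have one_ker: "\<And>n (v :: real vec). v \<in> carrier_vec n \<Longrightarrow> 1\<^sub>m n *\<^sub>v v = 0\<^sub>v n \<Longrightarrow> v = 0\<^sub>v n"
    by simp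
  define P where "P = four_block_mat (1\<^sub>m nx) (0\<^sub>m nx ?\<nu>) (0\<^sub>m nd nx) Kb"
  define Q where "Q = four_block_mat P (0\<^sub>m nbar (L * nu)) (0\<^sub>m (L * nu) (nx + ?\<nu>)) (1\<^sub>m (L * nu))"
  have P: "P \<in> carrier_mat nbar (nx + ?\<nu>)" unfolding P_def using Kb(1) by auto
  have Q: "Q \<in> carrier_mat (nbar + L * nu) (nx + ?\<nu> + L * nu)" unfolding Q_def using P by auto
  have P_colspace: "colspace P = {x @\<^sub>v d | x d. x \<in> carrier_vec nx \<and> d \<in> colspace Kd}"
    unfolding P_def colspace_four_block_diag[OF one_carrier_mat Kb(1)] colspace_one_mat Kb(2) ..
  have "colspace Q = colspace (Hx @\<^sub>r Hu)"
    unfolding Q_def colspace_four_block_diag[OF P one_carrier_mat] colspace_one_mat colspace_data_mat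
      P_colspace
    by blast
  then have "vec_space.rank (nbar + L * nu) (Hx @\<^sub>r Hu) = vec_space.rank (nbar + L * nu) Q"
    by (intro rank_eq_if_colspace_eq[OF data_mat_carrier Q]) simp
  also have "\<dots> = nx + ?\<nu> + L * nu"
  proof (rule rank_eq_dim_col_if_kernel_trivial[OF Q])
    have P_ker: "\<And>x. x \<in> carrier_vec (nx + ?\<nu>) \<Longrightarrow> P *\<^sub>v x = 0\<^sub>v nbar \<Longrightarrow> x = 0\<^sub>v (nx + ?\<nu>)"
      unfolding P_def by (rule four_block_diag_kernel_trivial[OF one_carrier_mat Kb(1) one_ker Kb_ker])
    show "\<And>v. v \<in> carrier_vec (nx + ?\<nu> + L * nu) \<Longrightarrow> Q *\<^sub>v v = 0\<^sub>v (nbar + L * nu) \<Longrightarrow>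
        v = 0\<^sub>v (nx + ?\<nu> + L * nu)"
      unfolding Q_def by (rule four_block_diag_kernel_trivial[OF P one_carrier_mat P_ker one_ker])
  qed
  finally show ?thesis by simp
qed

lemma data_combination_reaches:
  assumes "x0 \<in> carrier_vec nx" and "d0 \<in> colspace Kd" and "\<And>k. k < L \<Longrightarrow> u k \<in> carrier_vec nu"
  shows "\<exists>g \<in> carrier_vec (N + nbar). (Hx @\<^sub>r Hu) *\<^sub>v g = (x0 @\<^sub>v d0) @\<^sub>v stack nu 0 L u"
proof -
  obtain g where "g \<in> carrier_vec (N + nbar)" "(x0 @\<^sub>v d0) @\<^sub>v stack nu 0 L u = (Hx @\<^sub>r Hu) *\<^sub>v g"
    using data_colspace_contains[OF assms(1,2) stack_carrier[of nu 0 L u]]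
    by (rule colspaceE[OF _ data_mat_carrier])
  then show ?thesis by auto
qed

lemma data_combination_trajectory:
  assumes g: "g \<in> carrier_vec (N + nbar)"
    and Hx_g: "Hx *\<^sub>v g = xb 0" and Hu_g: "Hu *\<^sub>v g = stack nu 0 L u"
    and u: "\<And>k. k < L \<Longrightarrow> u k \<in> carrier_vec nu"
    and xb: "\<And>k. Suc k < L \<Longrightarrow> xb (Suc k) = AL *\<^sub>v xb k + BL *\<^sub>v u k"
    and k: "k < L"
  shows "block_hankel nbar k 1 (N + nbar) xbm *\<^sub>v g = xb k \<and> block_hankel nu k 1 (N + nbar) um *\<^sub>v g = u k"
proof -
  let ?Nc = "N + nbar"
  have U: "block_hankel nu k 1 ?Nc um *\<^sub>v g = u k" if k: "k < L" for k
  proof -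
    let ?U = "\<lambda>k. block_hankel nu k 1 ?Nc um *\<^sub>v g"
    have "stack nu 0 L ?U = stack nu 0 L u"
      using Hu_g block_hankel_mult_vec_stack[OF g, of nu 0 L um] by simp
    moreover have "?U k \<in> carrier_vec nu"
      using mult_mat_vec_carrier[OF block_hankel_carrier[of nu k 1 ?Nc um] g] by simp
    ultimately show ?thesis using stack_eq_imp_eq[of nu 0 L ?U u k] k u[OF k] by simp
  qed
  have "block_hankel nbar k 1 ?Nc xbm *\<^sub>v g = xb k"
    using k
  proof (induction k)
    case 0
    then show ?case using Hx_g by simp
  next
    case (Suc k)
    then have k: "k < L" by simp
    have "xbm (Suc k + c) = AL *\<^sub>v xbm (k + c) + BL *\<^sub>v um (k + c)" if "c < ?Nc" for c
      using xbm_Suc[of "k + c"] Suc.prems that L by simp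
    moreover have "xbm (k + c) \<in> carrier_vec nbar" "um (k + c) \<in> carrier_vec nu" if "c < ?Nc" for c
      using k that by (auto intro: xbm_carrier um_carrier)
    ultimately have "block_hankel nbar (Suc k) 1 ?Nc xbm *\<^sub>v g
        = AL *\<^sub>v (block_hankel nbar k 1 ?Nc xbm *\<^sub>v g) + BL *\<^sub>v (block_hankel nu k 1 ?Nc um *\<^sub>v g)"
      using block_hankel_one_linear_update[where i = k and j = "Suc k" and w = xbm and v = um and z = xbm
          and N = ?Nc, OF AL_carrier BL_carrier _ _ _ g] by blast
    then show ?case using Suc xb U[OF k] by simp
  qed
  then show ?thesis using U[OF k] by simp
qed

lemma data_reproduces_trajectories:
  assumes C: "C \<in> carrier_mat ny nx" and Cd: "Cd \<in> carrier_mat ny nd" and D: "D \<in> carrier_mat ny nu"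
    and ym: "\<And>k. k \<le> T \<Longrightarrow> ym k = hcat C Cd *\<^sub>v xbm k + D *\<^sub>v um k"
    and x0: "x0 \<in> carrier_vec nx" and d0: "d0 \<in> colspace Kd" and xb0: "xb 0 = x0 @\<^sub>v d0"
    and u: "\<And>k. k < L \<Longrightarrow> u k \<in> carrier_vec nu"
    and xb: "\<And>k. Suc k < L \<Longrightarrow> xb (Suc k) = AL *\<^sub>v xb k + BL *\<^sub>v u k"
    and y: "\<And>k. k < L \<Longrightarrow> y k = hcat C Cd *\<^sub>v xb k + D *\<^sub>v u k"
  shows "\<exists>g \<in> carrier_vec (N + nbar).
    (Hu @\<^sub>r block_hankel ny 0 L (N + nbar) ym) *\<^sub>v g = stack nu 0 L u @\<^sub>v stack ny 0 L y"
proof -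
  let ?Nc = "N + nbar"
  have CL: "hcat C Cd \<in> carrier_mat ny nbar" unfolding hcat_def using C Cd by auto
  obtain g where g: "g \<in> carrier_vec ?Nc" and "(Hx @\<^sub>r Hu) *\<^sub>v g = (x0 @\<^sub>v d0) @\<^sub>v stack nu 0 L u"
    using data_combination_reaches[of x0 d0 u, OF x0 d0 u] by blast
  then have "(Hx *\<^sub>v g) @\<^sub>v (Hu *\<^sub>v g) = (x0 @\<^sub>v d0) @\<^sub>v stack nu 0 L u"
    using mat_mult_append[OF block_hankel_carrier block_hankel_carrier g] by simp
  moreover have "x0 @\<^sub>v d0 \<in> carrier_vec nbar" using x0 d0 Kd_carrier by (auto simp: colspace_def)
  ultimately have Hx_g: "Hx *\<^sub>v g = xb 0" and Hu_g: "Hu *\<^sub>v g = stack nu 0 L u"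
    using append_vec_eq[OF Hx_mult_vec_carrier[OF g]] xb0 by auto
  have Y: "block_hankel ny k 1 ?Nc ym *\<^sub>v g = y k" if k: "k < L" for k
  proof -
    have "ym (k + c) = hcat C Cd *\<^sub>v xbm (k + c) + D *\<^sub>v um (k + c)" if "c < ?Nc" for c
      using ym k that by simp
    moreover have "xbm (k + c) \<in> carrier_vec nbar" "um (k + c) \<in> carrier_vec nu" if "c < ?Nc" for c
      using k that by (auto intro: xbm_carrier um_carrier)
    ultimately have "block_hankel ny k 1 ?Nc ym *\<^sub>v g
        = hcat C Cd *\<^sub>v (block_hankel nbar k 1 ?Nc xbm *\<^sub>v g) + D *\<^sub>v (block_hankel nu k 1 ?Nc um *\<^sub>v g)"
      using block_hankel_one_linear_update[where i = k and j = k and w = xbm and v = um and z = ym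
          and N = ?Nc, OF CL D _ _ _ g] by blast
    then show ?thesis using data_combination_trajectory[OF g Hx_g Hu_g u xb k] y[OF k] by simp
  qed
  have "block_hankel ny 0 L ?Nc ym *\<^sub>v g = stack ny 0 L (\<lambda>k. block_hankel ny (0 + k) 1 ?Nc ym *\<^sub>v g)"
    by (rule block_hankel_mult_vec_stack[OF g])
  also have "\<dots> = stack ny 0 L y" by (rule stack_cong) (use Y in simp)
  finally have "(Hu @\<^sub>r block_hankel ny 0 L ?Nc ym) *\<^sub>v g = stack nu 0 L u @\<^sub>v stack ny 0 L y"
    using mat_mult_append[OF block_hankel_carrier block_hankel_carrier g] Hu_g by simp
  then show ?thesis using g by blast
qed

end

theorem theorem2:
  fixes nx nd nu ny N L \<nu> :: nat
    and A Bd Ad B C Cd D :: "real mat"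
    and um :: "nat \<Rightarrow> real vec" and xbm :: "nat \<Rightarrow> real vec" and ym :: "nat \<Rightarrow> real vec"
  defines "nbar \<equiv> nx + nd"
  defines "AL \<equiv> four_block_mat A Bd (0\<^sub>m nd nx) Ad"
  defines "BL \<equiv> B @\<^sub>r 0\<^sub>m nd nu"
  defines "CL \<equiv> hcat C Cd"
  defines "T \<equiv> N + L + nbar - 2"
  defines "dm0 \<equiv> vec_last (xbm 0) nd"
  defines "Kd \<equiv> mat nd nd (\<lambda>(r, c). (Ad ^\<^sub>m c *\<^sub>v dm0) $ r)"
  assumes A: "A \<in> carrier_mat nx nx" and Bd: "Bd \<in> carrier_mat nx nd"
    and Ad: "Ad \<in> carrier_mat nd nd" and B: "B \<in> carrier_mat nx nu"
    and C: "C \<in> carrier_mat ny nx" and Cd: "Cd \<in> carrier_mat ny nd"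
    and D: "D \<in> carrier_mat ny nu"
    and N: "N \<ge> 1" and L: "L \<ge> 1"
    and um_dim: "\<forall>k \<le> T. um k \<in> carrier_vec nu"
    and xbm0: "xbm 0 \<in> carrier_vec nbar"
    and xbm_dyn: "\<forall>k < T. xbm (Suc k) = AL *\<^sub>v xbm k + BL *\<^sub>v um k"
    and ym_out: "\<forall>k \<le> T. ym k = CL *\<^sub>v xbm k + D *\<^sub>v um k"
    and ctrb: "controllable A B"
    and rank_Kd: "mrank Kd = \<nu>" and nu_pos: "1 \<le> \<nu>" and nu_lt: "\<nu> < nd"
    and PE: "pers_exc nu 0 (L + nbar) N um"
  shows
    "mrank (block_hankel nbar 0 1 (N + nbar) xbm @\<^sub>r block_hankel nu 0 L (N + nbar) um)
        = L * nu + nx + \<nu>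
     \<and> (\<forall>x0 d0 u. x0 \<in> carrier_vec nx \<longrightarrow> d0 \<in> colspace Kd \<longrightarrow>
          (\<forall>k < L. u k \<in> carrier_vec nu) \<longrightarrow>
          (\<exists>g \<in> carrier_vec (N + nbar).
             (block_hankel nbar 0 1 (N + nbar) xbm @\<^sub>r block_hankel nu 0 L (N + nbar) um) *\<^sub>v g
               = (x0 @\<^sub>v d0) @\<^sub>v stack nu 0 L u))
     \<and> (\<forall>x0 d0 xb u y. x0 \<in> carrier_vec nx \<longrightarrow> d0 \<in> colspace Kd \<longrightarrow>
          xb 0 = x0 @\<^sub>v d0 \<longrightarrow>
          (\<forall>k < L. u k \<in> carrier_vec nu) \<longrightarrow>
          (\<forall>k. Suc k < L \<longrightarrow> xb (Suc k) = AL *\<^sub>v xb k + BL *\<^sub>v u k) \<longrightarrow>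
          (\<forall>k < L. y k = CL *\<^sub>v xb k + D *\<^sub>v u k) \<longrightarrow>
          (\<exists>g \<in> carrier_vec (N + nbar).
             (block_hankel nu 0 L (N + nbar) um @\<^sub>r block_hankel ny 0 L (N + nbar) ym) *\<^sub>v g
               = stack nu 0 L u @\<^sub>v stack ny 0 L y))"
proof -
  have "exciting_lti_experiment nx nd nu N L A Bd Ad B um xbm"
    by unfold_locales
      (use A Bd Ad B N L um_dim xbm0 xbm_dyn ctrb PE in \<open>auto simp: nbar_def T_def AL_def BL_def\<close>)
  then interpret exciting_lti_experiment nx nd nu N L A Bd Ad B um xbm .
  have Kd_eq: "Kd = krylov_mat Ad (vec_last (xbm 0) nd) nd"
    unfolding Kd_def dm0_def krylov_mat_def by simp
  have "vec_space.rank nd (krylov_mat Ad (vec_last (xbm 0) nd) nd) = \<nu>"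
    using rank_Kd Kd_carrier unfolding Kd_eq mrank_def by simp
  then have "mrank (Hx @\<^sub>r Hu) = L * nu + nx + \<nu>"
    using rank_data_mat data_mat_carrier unfolding mrank_def by simp
  moreover note data_combination_reaches
  moreover note data_reproduces_trajectories[OF C Cd D, of ym]
  ultimately show ?thesis
    using ym_out unfolding nbar_def Kd_eq AL_def BL_def CL_def T_def by auto
qed

end
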